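(* Consider the asymptotic framework and setting in the context, and assume Conditions ASM and RSE hold. Fix $c>1$. Suppose $\lambda$ is chosen either as $\lambda=2c\sigma\sqrt n\,\Phi^{-1}(1-\alpha/2p)$ or as $\lambda=2c\sigma\Lambda(1-\alpha\mid X)$ with $\alpha=\alpha_n=o(1)$ and $\log(1/\alpha)\lesssim\log p$, or more generally so that $\lambda\lesssim_P\sigma\sqrt{n\log p}$ and $\lambda\geqslant c' n\|S\|_\infty$ with probability tending to one, for some constant $c'>1$. Then any LASSO solution $\widehat\beta$ satisfies $$\|\widehat\beta-\beta_0\|_{2,n}\lesssim_P\sigma\sqrt{\frac{s\log p}{n}}+c_s.$$
   Context: Asymptotic framework: all quantities are indexed by $n$, $n\to\infty$, $p=p_n\to\infty$, and $s=s_n$ may grow; $a\lesssim b$ means $a\leqslant Cb$ for a constant $C$ not depending on $n$, and $a\lesssim_P b$ means $a=O_P(b)$. Condition ASM: for each $n$ we observe $(y_i,z_i)$, $i=1,\dots,n$, $z_i$ fixed, $y_i=f(z_i)+\varepsilon_i$, $\varepsilon_i$ i.i.d. $N(0,\sigma^2)$. Write $f_i=f(z_i)$, $\mathbb{E}_n[a_i]=n^{-1}\sum_i a_i$, $x_i=P(z_i)\in\mathbb{R}^p$ (including a constant) with $\mathbb{E}_n[x_{ij}^2]=1$ for all $j$. $\beta_0$ is any solution of $\min_\beta\mathbb{E}_n[(f_i-x_i'\beta)^2]+\sigma^2\|\beta\|_0/n$; $s=\|\beta_0\|_0$, $T=\mathrm{support}(\beta_0)$, $r_i=f_i-x_i'\beta_0$,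 $c_s=\sqrt{\mathbb{E}_n[r_i^2]}\leqslant K\sigma\sqrt{s/n}$ for an absolute constant $K$. $\|\delta\|_{2,n}=\sqrt{\mathbb{E}_n[(x_i'\delta)^2]}$; $S=2\mathbb{E}_n[x_i\varepsilon_i]$; $\widehat Q(\beta)=\mathbb{E}_n[(y_i-x_i'\beta)^2]$; LASSO: $\widehat\beta\in\arg\min_\beta\widehat Q(\beta)+\frac\lambda n\|\beta\|_1$. Sparse eigenvalues: $\kappa(m)^2=\min\{\|\delta\|_{2,n}^2/\|\delta\|^2:\delta\neq0,\ \|\delta_{T^c}\|_0\leqslant m\}$, $\phi(m)=\max\{\|\delta\|_{2,n}^2/\|\delta\|^2:\delta\neq0,\ \|\delta_{T^c}\|_0\leqslant m\}$, $\mu(m)=\sqrt{\phi(m)}/\kappa(m)$, where $\delta_{T^c}$ is $\delta$ with entries in $T$ set to zero. Condition RSE: for $m=m_n=s\log n$, $\mu(m)\lesssim1$, $\phi(m)\lesssim1$, $1/\kappa(m)\lesssim1$. $\Phi$ is the standard normal cdf and $\Lambda(1-\alpha\mid X)$ is the $(1-\alpha)$-quantile of $n\|S/(2\sigma)\|_\infty$ conditional on $X=(x_1,\dots,x_n)'$. *)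

theory Defs
  imports "HOL-Probability.Probability"
begin

text \<open>Vectors in R^p are represented as functions nat => real vanishing off {..<p}.
  Observations are indexed by i < n, coordinates by j < p.\<close>

definition vecs :: "nat \<Rightarrow> (nat \<Rightarrow> real) set" where
  "vecs p = {b. \<forall>j\<ge>p. b j = 0}"

definition En :: "nat \<Rightarrow> (nat \<Rightarrow> real) \<Rightarrow> real" where
  "En n a = (\<Sum>i<n. a i) / real n"

definition xb :: "(nat \<Rightarrow> nat \<Rightarrow> real) \<Rightarrow> nat \<Rightarrow> nat \<Rightarrow> (nat \<Rightarrow> real) \<Rightarrow> real" where
  "xb x p i b = (\<Sum>j<p. x i j * b j)"

definition norm2n :: "nat \<Rightarrow> nat \<Rightarrow> (nat \<Rightarrow> nat \<Rightarrow> real) \<Rightarrow> (nat \<Rightarrow> real) \<Rightarrow> real" where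
  "norm2n n p x d = sqrt (En n (\<lambda>i. (xb x p i d)\<^sup>2))"

definition l2 :: "nat \<Rightarrow> (nat \<Rightarrow> real) \<Rightarrow> real" where
  "l2 p d = sqrt (\<Sum>j<p. (d j)\<^sup>2)"

definition l1 :: "nat \<Rightarrow> (nat \<Rightarrow> real) \<Rightarrow> real" where
  "l1 p d = (\<Sum>j<p. \<bar>d j\<bar>)"

definition linf :: "nat \<Rightarrow> (nat \<Rightarrow> real) \<Rightarrow> real" where
  "linf p d = Max (insert 0 ((\<lambda>j. \<bar>d j\<bar>) ` {..<p}))"

definition supp :: "nat \<Rightarrow> (nat \<Rightarrow> real) \<Rightarrow> nat set" where
  "supp p d = {j. j < p \<and> d j \<noteq> 0}"

definition l0 :: "nat \<Rightarrow> (nat \<Rightarrow> real) \<Rightarrow> nat" where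
  "l0 p d = card (supp p d)"

definition ratios :: "nat \<Rightarrow> nat \<Rightarrow> (nat \<Rightarrow> nat \<Rightarrow> real) \<Rightarrow> nat set \<Rightarrow> real \<Rightarrow> real set" where
  "ratios n p x T m = {(norm2n n p x d)\<^sup>2 / (l2 p d)\<^sup>2 | d.
       d \<in> vecs p \<and> d \<noteq> (\<lambda>_. 0) \<and> real (card (supp p d - T)) \<le> m}"

definition kappa :: "nat \<Rightarrow> nat \<Rightarrow> (nat \<Rightarrow> nat \<Rightarrow> real) \<Rightarrow> nat set \<Rightarrow> real \<Rightarrow> real" where
  "kappa n p x T m = sqrt (Inf (ratios n p x T m))"

definition phi :: "nat \<Rightarrow> nat \<Rightarrow> (nat \<Rightarrow> nat \<Rightarrow> real) \<Rightarrow> nat set \<Rightarrow> real \<Rightarrow> real" where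
  "phi n p x T m = Sup (ratios n p x T m)"

definition mu :: "nat \<Rightarrow> nat \<Rightarrow> (nat \<Rightarrow> nat \<Rightarrow> real) \<Rightarrow> nat set \<Rightarrow> real \<Rightarrow> real" where
  "mu n p x T m = sqrt (phi n p x T m) / kappa n p x T m"

definition Qhat :: "nat \<Rightarrow> nat \<Rightarrow> (nat \<Rightarrow> nat \<Rightarrow> real) \<Rightarrow> (nat \<Rightarrow> real) \<Rightarrow> (nat \<Rightarrow> real) \<Rightarrow> real" where
  "Qhat n p x y b = En n (\<lambda>i. (y i - xb x p i b)\<^sup>2)"

definition lasso_sol :: "nat \<Rightarrow> nat \<Rightarrow> (nat \<Rightarrow> nat \<Rightarrow> real) \<Rightarrow> (nat \<Rightarrow> real) \<Rightarrow> real \<Rightarrow> (nat \<Rightarrow> real) \<Rightarrow> bool" where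
  "lasso_sol n p x y lam b \<longleftrightarrow> b \<in> vecs p \<and>
     (\<forall>b'\<in>vecs p. Qhat n p x y b + lam / real n * l1 p b \<le> Qhat n p x y b' + lam / real n * l1 p b')"

definition oracle_sol :: "nat \<Rightarrow> nat \<Rightarrow> (nat \<Rightarrow> nat \<Rightarrow> real) \<Rightarrow> (nat \<Rightarrow> real) \<Rightarrow> real \<Rightarrow> (nat \<Rightarrow> real) \<Rightarrow> bool" where
  "oracle_sol n p x f sig b \<longleftrightarrow> b \<in> vecs p \<and>
     (\<forall>b'\<in>vecs p. Qhat n p x f b + sig\<^sup>2 * real (l0 p b) / real n
                 \<le> Qhat n p x f b' + sig\<^sup>2 * real (l0 p b') / real n)"

definition Svec :: "nat \<Rightarrow> (nat \<Rightarrow> nat \<Rightarrow> real) \<Rightarrow> (nat \<Rightarrow> real) \<Rightarrow> nat \<Rightarrow> real" where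
  "Svec n x e j = 2 * En n (\<lambda>i. x i j * e i)"

definition Phi :: "real \<Rightarrow> real" where
  "Phi t = measure (density lborel (\<lambda>u. ennreal (std_normal_density u))) {..t}"

definition Phi_inv :: "real \<Rightarrow> real" where
  "Phi_inv q = Inf {t. q \<le> Phi t}"

text \<open>Lambda(q | X): q-quantile of n ||S/(2 sig)||_inf (X is fixed, so this is the
  unconditional quantile under the model probability M).\<close>
definition Lambda_q :: "'a measure \<Rightarrow> nat \<Rightarrow> nat \<Rightarrow> (nat \<Rightarrow> nat \<Rightarrow> real) \<Rightarrow> real \<Rightarrow> (nat \<Rightarrow> 'a \<Rightarrow> real) \<Rightarrow> real \<Rightarrow> real" where
  "Lambda_q M n p x sig eps q = Inf {t. q \<le> measure M
      {\<omega> \<in> space M. real n * linf p (\<lambda>j. Svec n x (\<lambda>i. eps i \<omega>) j / (2 * sig)) \<le> t}}"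

text \<open>Stochastic boundedness X_n = O_P(b_n) (stated with inner probability, so no
  measurability of X_n is required) and "with probability tending to one".\<close>
definition bigOP :: "(nat \<Rightarrow> 'a measure) \<Rightarrow> (nat \<Rightarrow> 'a \<Rightarrow> real) \<Rightarrow> (nat \<Rightarrow> real) \<Rightarrow> bool" where
  "bigOP M X b \<longleftrightarrow> (\<forall>e>0. \<exists>C N. \<forall>n\<ge>N. \<exists>A\<in>sets (M n).
       1 - e \<le> measure (M n) A \<and> (\<forall>\<omega>\<in>A. \<bar>X n \<omega>\<bar> \<le> C * b n))"

definition whp :: "(nat \<Rightarrow> 'a measure) \<Rightarrow> (nat \<Rightarrow> 'a \<Rightarrow> bool) \<Rightarrow> bool" where
  "whp M P \<longleftrightarrow> (\<forall>e>0. \<exists>N. \<forall>n\<ge>N. \<exists>A\<in>sets (M n).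
       1 - e \<le> measure (M n) A \<and> (\<forall>\<omega>\<in>A. P n \<omega>))"

end

theory Submission
  imports Defs
begin

text \<open>Let \<open>\<delta> = \<beta>hat - \<beta>\<^sub>0\<close>. On the event \<open>\<lambda> \<ge> c' n |S|\<^sub>\<infinity>\<close>, the basic inequality of the
  LASSO yields either \<open>|\<delta>|\<^sub>2\<^sub>n \<le> 4 c\<^sub>s\<close>, or \<open>|\<delta>|\<^sub>2\<^sub>n\<^sup>2 \<le> 4 (\<lambda>/n) |\<delta>\<^sub>T|\<^sub>1\<close> with \<open>\<delta>\<close> in the cone
  \<open>|\<delta>\<^sub>T\<^sub>c|\<^sub>1 \<le> (c'+1)/(c'-1) |\<delta>\<^sub>T|\<^sub>1\<close>. Shelling the coordinates outside \<open>T\<close> into blocks of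
  size about \<open>s log n\<close> shows that the sparse eigenvalues of Condition RSE bound the restricted
  eigenvalue on this cone away from zero once \<open>log n\<close> is large; with \<open>|\<delta>\<^sub>T|\<^sub>1 \<le> \<surd>s |\<delta>\<^sub>T|\<^sub>2\<close>
  this gives \<open>|\<delta>|\<^sub>2\<^sub>n \<lesssim> c\<^sub>s + \<surd>s \<lambda>/n\<close>. Finally, Gaussian tails and a union bound over the \<open>p\<close>
  coordinates of the score show that both explicit choices of \<open>\<lambda>\<close> exceed \<open>c n |S|\<^sub>\<infinity>\<close>
  with probability at least \<open>1 - \<alpha>\<close> while being of order \<open>\<sigma> \<surd>(n log p)\<close>.\<close>

lemma xb_add: "xb x p i (\<lambda>j. a j + b j) = xb x p i a + xb x p i b"
  unfolding xb_def by (simp add: distrib_left sum.distrib)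

lemma xb_uminus: "xb x p i (\<lambda>j. - a j) = - xb x p i a"
  unfolding xb_def by (simp add: sum_negf)

lemma En_nonneg: "(\<And>i. i < n \<Longrightarrow> 0 \<le> a i) \<Longrightarrow> 0 \<le> En n a"
  unfolding En_def by (auto intro!: divide_nonneg_nonneg sum_nonneg)

lemma norm2n_conv_L2_set: "norm2n n p x d = L2_set (\<lambda>i. xb x p i d) {..<n} / sqrt (real n)"
  unfolding norm2n_def En_def L2_set_def by (simp add: real_sqrt_divide)

lemma norm2n_nonneg: "0 \<le> norm2n n p x d"
  unfolding norm2n_def using En_nonneg[of n "\<lambda>i. (xb x p i d)\<^sup>2"] by simp

lemma norm2n_sq: "(norm2n n p x d)\<^sup>2 = En n (\<lambda>i. (xb x p i d)\<^sup>2)"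
  unfolding norm2n_def using En_nonneg[of n "\<lambda>i. (xb x p i d)\<^sup>2"] by simp

lemma norm2n_triangle: "norm2n n p x (\<lambda>j. a j + b j) \<le> norm2n n p x a + norm2n n p x b"
  unfolding norm2n_conv_L2_set xb_add
  using L2_set_triangle_ineq[of "\<lambda>i. xb x p i a" "\<lambda>i. xb x p i b" "{..<n}"]
  by (simp add: divide_right_mono add_divide_distrib[symmetric])

lemma norm2n_uminus: "norm2n n p x (\<lambda>j. - a j) = norm2n n p x a"
  unfolding norm2n_def xb_uminus by simp

lemma norm2n_sq_le_l2:
  assumes "n \<ge> 1" and "\<And>j. j < p \<Longrightarrow> En n (\<lambda>i. (x i j)\<^sup>2) = 1"
  shows "(norm2n n p x d)\<^sup>2 \<le> real p * (l2 p d)\<^sup>2"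
proof -
  have "(xb x p i d)\<^sup>2 \<le> (\<Sum>j<p. (x i j)\<^sup>2) * (l2 p d)\<^sup>2" for i
  proof -
    have "\<bar>xb x p i d\<bar> \<le> (\<Sum>j<p. \<bar>x i j\<bar> * \<bar>d j\<bar>)"
      unfolding xb_def by (rule order_trans[OF sum_abs]) (simp add: abs_mult)
    also have "\<dots> \<le> L2_set (x i) {..<p} * L2_set d {..<p}"
      by (rule L2_set_mult_ineq)
    finally have "(xb x p i d)\<^sup>2 \<le> (L2_set (x i) {..<p} * L2_set d {..<p})\<^sup>2"
      by (metis abs_ge_zero order_trans power2_abs power_mono)
    thus ?thesis unfolding power_mult_distrib L2_set_def l2_def by (simp add: sum_nonneg)
  qed
  hence "(\<Sum>i<n. (xb x p i d)\<^sup>2) \<le> (\<Sum>i<n. (\<Sum>j<p. (x i j)\<^sup>2) * (l2 p d)\<^sup>2)"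
    by (rule sum_mono)
  also have "\<dots> = (\<Sum>j<p. \<Sum>i<n. (x i j)\<^sup>2) * (l2 p d)\<^sup>2"
    by (simp only: sum_distrib_right[symmetric] sum.swap[of _ "{..<n}"])
  also have "(\<Sum>j<p. \<Sum>i<n. (x i j)\<^sup>2) = (\<Sum>j<p. real n)"
    using assms unfolding En_def by (intro sum.cong) (auto simp: field_simps)
  finally show ?thesis using assms(1) unfolding norm2n_sq En_def by (simp add: field_simps)
qed

lemma l2_pos:
  assumes "d \<in> vecs p" "d \<noteq> (\<lambda>_. 0)"
  shows "0 < l2 p d"
proof -
  obtain j where j: "d j \<noteq> 0" using assms(2) by auto
  with assms(1) have "j < p" unfolding vecs_def by (auto simp: not_less[symmetric])
  have "0 < (d j)\<^sup>2" using j by simp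
  also have "\<dots> \<le> (\<Sum>j<p. (d j)\<^sup>2)" by (rule member_le_sum) (use \<open>j < p\<close> in auto)
  finally show ?thesis unfolding l2_def by simp
qed

lemma bdd_below_ratios: "bdd_below (ratios n p x T m)"
  unfolding ratios_def by (rule bdd_belowI[of _ 0]) auto

lemma bdd_above_ratios:
  assumes "n \<ge> 1" and "\<And>j. j < p \<Longrightarrow> En n (\<lambda>i. (x i j)\<^sup>2) = 1"
  shows "bdd_above (ratios n p x T m)"
proof (rule bdd_aboveI[of _ "real p"])
  fix r assume "r \<in> ratios n p x T m"
  then obtain d where r: "r = (norm2n n p x d)\<^sup>2 / (l2 p d)\<^sup>2"
    and d: "d \<in> vecs p" "d \<noteq> (\<lambda>_. 0)" unfolding ratios_def by blast
  have "0 < (l2 p d)\<^sup>2" using l2_pos[OF d] by simp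
  thus "r \<le> real p" unfolding r using norm2n_sq_le_l2[OF assms, where d=d]
    by (simp only: pos_divide_le_eq)
qed

lemma sparse_eigenvalue_bounds:
  assumes n: "n \<ge> 1" and nrm: "\<And>j. j < p \<Longrightarrow> En n (\<lambda>i. (x i j)\<^sup>2) = 1"
    and kappa_pos: "0 < kappa n p x T m"
    and d: "d \<in> vecs p" and sparse: "real (card (supp p d - T)) \<le> m"
  shows "kappa n p x T m * l2 p d \<le> norm2n n p x d"
    and "norm2n n p x d \<le> sqrt (phi n p x T m) * l2 p d"
proof -
  have "kappa n p x T m * l2 p d \<le> norm2n n p x d \<and> norm2n n p x d \<le> sqrt (phi n p x T m) * l2 p d"
  proof (cases "d = (\<lambda>_. 0)")
    case True
    thus ?thesis by (simp add: norm2n_def En_def xb_def l2_def)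
  next
    case False
    have l2: "0 < l2 p d" by (rule l2_pos[OF d False])
    define r where "r = (norm2n n p x d)\<^sup>2 / (l2 p d)\<^sup>2"
    have r: "r \<in> ratios n p x T m" unfolding ratios_def r_def using d False sparse by blast
    have norm_sq: "(norm2n n p x d)\<^sup>2 = r * (l2 p d)\<^sup>2" unfolding r_def using l2 by simp
    have "Inf (ratios n p x T m) \<le> r" by (rule cInf_lower[OF r bdd_below_ratios])
    moreover have "0 \<le> Inf (ratios n p x T m)" using kappa_pos unfolding kappa_def by simp
    ultimately have "(kappa n p x T m * l2 p d)\<^sup>2 \<le> (norm2n n p x d)\<^sup>2"
      unfolding norm_sq kappa_def power_mult_distrib by (simp add: mult_right_mono)
    hence lower: "kappa n p x T m * l2 p d \<le> norm2n n p x d"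
      using norm2n_nonneg by (rule power2_le_imp_le)
    have "r \<le> phi n p x T m" unfolding phi_def by (rule cSup_upper[OF r bdd_above_ratios[OF n nrm]])
    moreover have "0 \<le> r" unfolding r_def by simp
    ultimately have "(norm2n n p x d)\<^sup>2 \<le> (sqrt (phi n p x T m) * l2 p d)\<^sup>2"
      unfolding norm_sq power_mult_distrib by (simp add: mult_right_mono)
    hence "norm2n n p x d \<le> sqrt (phi n p x T m) * l2 p d"
      by (rule power2_le_imp_le) (use \<open>r \<le> phi n p x T m\<close> \<open>0 \<le> r\<close> l2 in simp)
    thus ?thesis using lower by blast
  qed
  thus "kappa n p x T m * l2 p d \<le> norm2n n p x d" "norm2n n p x d \<le> sqrt (phi n p x T m) * l2 p d"
    by auto
qed

lemma phi_nonneg: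
  assumes "n \<ge> 1" and "\<And>j. j < p \<Longrightarrow> En n (\<lambda>i. (x i j)\<^sup>2) = 1"
    and "j \<in> T" "j < p" "0 \<le> m"
  shows "0 \<le> phi n p x T m"
proof -
  define d :: "nat \<Rightarrow> real" where "d = (\<lambda>i. if i = j then 1 else 0)"
  have "d \<in> vecs p" "d \<noteq> (\<lambda>_. 0)" using assms(4) unfolding d_def vecs_def by (auto simp: fun_eq_iff)
  moreover have "supp p d - T = {}" using assms(3) unfolding d_def supp_def by auto
  moreover have "real (card (supp p d - T)) \<le> m" using \<open>supp p d - T = {}\<close> assms(5) by (simp only: card.empty of_nat_0)
  ultimately have "(norm2n n p x d)\<^sup>2 / (l2 p d)\<^sup>2 \<in> ratios n p x T m"
    unfolding ratios_def by blast
  hence "(norm2n n p x d)\<^sup>2 / (l2 p d)\<^sup>2 \<le> phi n p x T m"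
    unfolding phi_def by (rule cSup_upper[OF _ bdd_above_ratios[OF assms(1,2)]])
  moreover have "0 \<le> (norm2n n p x d)\<^sup>2 / (l2 p d)\<^sup>2" by simp
  ultimately show ?thesis by linarith
qed

definition restrict_vec :: "nat set \<Rightarrow> (nat \<Rightarrow> real) \<Rightarrow> nat \<Rightarrow> real" where
  "restrict_vec W d = (\<lambda>j. if j \<in> W then d j else 0)"

lemma restrict_vec_in_vecs: "W \<subseteq> {..<p} \<Longrightarrow> restrict_vec W d \<in> vecs p"
  unfolding vecs_def restrict_vec_def by auto

lemma supp_restrict_vec_subset: "supp p (restrict_vec W d) \<subseteq> W"
  unfolding supp_def restrict_vec_def by auto

lemma l2_restrict_vec:
  assumes "W \<subseteq> {..<p}"
  shows "l2 p (restrict_vec W d) = L2_set d W"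
proof -
  have "(\<Sum>j<p. (restrict_vec W d j)\<^sup>2) = (\<Sum>j\<in>W. (d j)\<^sup>2)"
    by (rule sum.mono_neutral_cong_right) (use assms in \<open>auto simp: restrict_vec_def\<close>)
  thus ?thesis unfolding l2_def L2_set_def by simp
qed

lemma sqrt_mult_divide_self:
  fixes k :: real
  assumes "0 < k"
  shows "sqrt k * a / k = a / sqrt k"
proof -
  have "sqrt k * a / k = a * sqrt k / (sqrt k * sqrt k)" using assms by simp
  also have "\<dots> = a / sqrt k" using assms by (simp del: real_sqrt_mult_self)
  finally show ?thesis .
qed

lemma sum_abs_le_sqrt_card_L2_set: "(\<Sum>j\<in>T. \<bar>d j\<bar>) \<le> sqrt (real (card T)) * L2_set d T"
proof -
  have "(\<Sum>j\<in>T. \<bar>d j\<bar>) = (\<Sum>j\<in>T. \<bar>d j\<bar> * \<bar>1::real\<bar>)" by simp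
  also have "\<dots> \<le> L2_set d T * L2_set (\<lambda>_. 1::real) T" by (rule L2_set_mult_ineq)
  finally show ?thesis by (simp add: L2_set_constant mult.commute)
qed

lemma L2_set_subset_le: "finite W \<Longrightarrow> T \<subseteq> W \<Longrightarrow> L2_set d T \<le> L2_set d W"
  unfolding L2_set_def by (intro real_sqrt_le_mono sum_mono2) auto

lemma exists_subset_of_largest:
  fixes g :: "nat \<Rightarrow> real"
  assumes "finite U"
  shows "\<exists>B\<subseteq>U. card B = min k (card U) \<and> (\<forall>b\<in>B. \<forall>r\<in>U-B. g r \<le> g b)"
proof (induction k)
  case 0
  show ?case by (rule exI[of _ "{}"]) simp
next
  case (Suc k)
  then obtain B where B: "B \<subseteq> U" "card B = min k (card U)" "\<forall>b\<in>B. \<forall>r\<in>U-B. g r \<le> g b"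
    by blast
  show ?case
  proof (cases "B = U")
    case True
    thus ?thesis using B by (intro exI[of _ B]) auto
  next
    case False
    with B(1) assms have "U - B \<noteq> {}" "finite (U - B)" by auto
    hence "Max (g ` (U - B)) \<in> g ` (U - B)" by (intro Max_in) auto
    then obtain r0 where r0: "r0 \<in> U - B" "g r0 = Max (g ` (U - B))" by auto
    have "card B < card U" using B(1) False by (intro psubset_card_mono[OF assms]) auto
    hence "card B = k" "card (insert r0 B) = Suc k"
      using B(1,2) r0(1) assms by (auto simp: finite_subset)
    moreover have "\<forall>r\<in>U-B. g r \<le> g r0" using r0 \<open>finite (U - B)\<close> by auto
    ultimately show ?thesis
      using B r0(1) \<open>card B < card U\<close> by (intro exI[of _ "insert r0 B"]) auto
  qed
qed

lemma largest_block:
  fixes v :: "nat \<Rightarrow> real"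
  assumes "finite U"
  obtains B where "B \<subseteq> U" "card B \<le> k"
    "\<And>j. j \<in> U - B \<Longrightarrow> card B = k \<and> real k * \<bar>v j\<bar> \<le> (\<Sum>b\<in>B. \<bar>v b\<bar>)"
proof -
  obtain B where B: "B \<subseteq> U" "card B = min k (card U)" "\<forall>b\<in>B. \<forall>r\<in>U-B. \<bar>v r\<bar> \<le> \<bar>v b\<bar>"
    using exists_subset_of_largest[OF assms, where k=k and g="\<lambda>j. \<bar>v j\<bar>"] by blast
  have "card B = k \<and> real k * \<bar>v j\<bar> \<le> (\<Sum>b\<in>B. \<bar>v b\<bar>)" if j: "j \<in> U - B" for j
  proof
    have "card B < card U" using B(1) j by (intro psubset_card_mono[OF assms]) blast
    thus "card B = k" using B(2) by (simp add: min_def split: if_splits)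
    have "(\<Sum>b\<in>B. \<bar>v j\<bar>) \<le> (\<Sum>b\<in>B. \<bar>v b\<bar>)" using B(3) j by (intro sum_mono) blast
    thus "real k * \<bar>v j\<bar> \<le> (\<Sum>b\<in>B. \<bar>v b\<bar>)" using \<open>card B = k\<close> by simp
  qed
  moreover have "card B \<le> k" using B(2) by simp
  ultimately show ?thesis using that[OF B(1)] by blast
qed

lemma norm2n_restrict_vec_block:
  assumes \<gamma>: "0 \<le> \<gamma>"
    and upper: "\<And>d. d \<in> vecs p \<Longrightarrow> card (supp p d - T) \<le> k \<Longrightarrow> norm2n n p x d \<le> \<gamma> * l2 p d"
    and B: "B \<subseteq> {..<p}" "card B \<le> k" and t: "0 \<le> t" "\<And>j. j \<in> B \<Longrightarrow> \<bar>v j\<bar> \<le> t"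
  shows "norm2n n p x (restrict_vec B v) \<le> \<gamma> * (sqrt k * t)"
proof -
  have "finite B" using B(1) by (rule finite_subset) simp
  hence "card (supp p (restrict_vec B v) - T) \<le> card B"
    by (rule card_mono) (use supp_restrict_vec_subset[of p B v] in blast)
  hence "norm2n n p x (restrict_vec B v) \<le> \<gamma> * L2_set v B"
    using upper[OF restrict_vec_in_vecs[OF B(1)]] B(2) l2_restrict_vec[OF B(1)] by simp
  also have "L2_set v B = L2_set (\<lambda>j. \<bar>v j\<bar>) B" by (simp add: L2_set_def)
  also have "\<dots> \<le> L2_set (\<lambda>_. t) B" using t(2) by (intro L2_set_mono) auto
  also have "\<dots> \<le> sqrt k * t" using B(2) t(1) by (simp add: L2_set_constant mult_right_mono)
  finally show ?thesis using \<gamma> by (simp add: mult_left_mono)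
qed

lemma sum_abs_block_split:
  fixes k :: nat
  assumes "k \<ge> 1" "B \<subseteq> U" "finite U"
  shows "sqrt k * ((\<Sum>b\<in>B. \<bar>v b\<bar>) / k) + (\<Sum>j\<in>U - B. \<bar>v j\<bar>) / sqrt k = (\<Sum>j\<in>U. \<bar>v j\<bar>) / sqrt k"
  using assms sum.subset_diff[OF assms(2,3), of "\<lambda>j. \<bar>v j\<bar>"]
  by (simp add: sqrt_mult_divide_self add_divide_distrib)

text \<open>Shelling: cut the coordinates outside \<open>T\<close> into consecutive blocks of size \<open>k\<close> in
  decreasing order of magnitude and apply the sparse upper bound to each block.\<close>
lemma norm2n_restrict_vec_shelling:
  assumes k: "k \<ge> 1" and \<gamma>: "0 \<le> \<gamma>"
    and upper: "\<And>d. d \<in> vecs p \<Longrightarrow> card (supp p d - T) \<le> k \<Longrightarrow> norm2n n p x d \<le> \<gamma> * l2 p d"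
  shows "U \<subseteq> {..<p} - T \<Longrightarrow> 0 \<le> t \<Longrightarrow> (\<And>j. j \<in> U \<Longrightarrow> \<bar>v j\<bar> \<le> t) \<Longrightarrow>
    norm2n n p x (restrict_vec U v) \<le> \<gamma> * (sqrt k * t + (\<Sum>j\<in>U. \<bar>v j\<bar>) / sqrt k)"
proof (induction "card U" arbitrary: U t rule: less_induct)
  case less
  have Up: "U \<subseteq> {..<p}" and fin: "finite U" using less.prems(1) finite_subset by auto
  show ?case
  proof (cases "card U \<le> k")
    case True
    have "norm2n n p x (restrict_vec U v) \<le> \<gamma> * (sqrt k * t)"
      by (rule norm2n_restrict_vec_block[where T=T]) (use \<gamma> upper Up True less.prems(2,3) in auto)
    moreover have "0 \<le> \<gamma> * ((\<Sum>j\<in>U. \<bar>v j\<bar>) / sqrt k)" using \<gamma> by (simp add: sum_nonneg)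
    ultimately show ?thesis by (simp add: distrib_left)
  next
    case False
    obtain B where B: "B \<subseteq> U" "card B \<le> k"
      and rest: "\<And>j. j \<in> U - B \<Longrightarrow> card B = k \<and> real k * \<bar>v j\<bar> \<le> (\<Sum>b\<in>B. \<bar>v b\<bar>)"
      using largest_block[OF fin, where k=k and v=v] by blast
    define R where "R = U - B"
    define t' where "t' = (\<Sum>b\<in>B. \<bar>v b\<bar>) / k"
    have "R \<noteq> {}" using B(1,2) False unfolding R_def by (metis Diff_eq_empty_iff subset_antisym)
    hence "card B = k" using rest unfolding R_def by blast
    moreover have "finite B" using B(1) fin by (rule finite_subset)
    ultimately have card_R: "card R < card U" using B(1) k False unfolding R_def by (simp add: card_Diff_subset)
    have R: "R \<subseteq> {..<p} - T" using less.prems(1) unfolding R_def by blast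
    have t': "0 \<le> t'" unfolding t'_def by (simp add: sum_nonneg)
    have "\<bar>v j\<bar> \<le> t'" if "j \<in> R" for j
      using rest[of j] that k unfolding R_def t'_def by (simp add: field_simps)
    hence "norm2n n p x (restrict_vec R v) \<le> \<gamma> * (sqrt k * t' + (\<Sum>j\<in>R. \<bar>v j\<bar>) / sqrt k)"
      by (rule less.hyps[OF card_R R t'])
    also have "sqrt k * t' + (\<Sum>j\<in>R. \<bar>v j\<bar>) / sqrt k = (\<Sum>j\<in>U. \<bar>v j\<bar>) / sqrt k"
      unfolding t'_def R_def by (rule sum_abs_block_split[OF k B(1) fin])
    finally have "norm2n n p x (restrict_vec R v) \<le> \<gamma> * ((\<Sum>j\<in>U. \<bar>v j\<bar>) / sqrt k)" .
    moreover have "restrict_vec U v = (\<lambda>j. restrict_vec B v j + restrict_vec R v j)"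
      using B(1) unfolding R_def restrict_vec_def by (auto simp: fun_eq_iff)
    moreover have "norm2n n p x (restrict_vec B v) \<le> \<gamma> * (sqrt k * t)"
      by (rule norm2n_restrict_vec_block[where T=T]) (use \<gamma> upper B Up less.prems(2,3) in auto)
    ultimately show ?thesis
      using norm2n_triangle[of n p x "restrict_vec B v" "restrict_vec R v"] by (simp add: distrib_left)
  qed
qed

definition restricted_eigenvalue_ge ::
    "nat \<Rightarrow> nat \<Rightarrow> (nat \<Rightarrow> nat \<Rightarrow> real) \<Rightarrow> nat set \<Rightarrow> real \<Rightarrow> real \<Rightarrow> bool" where
  "restricted_eigenvalue_ge n p x T cb \<kappa> \<longleftrightarrow> (\<forall>\<delta>\<in>vecs p.
     (\<Sum>j\<in>{..<p}-T. \<bar>\<delta> j\<bar>) \<le> cb * (\<Sum>j\<in>T. \<bar>\<delta> j\<bar>) \<longrightarrow> \<kappa> * L2_set \<delta> T \<le> norm2n n p x \<delta>)"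

lemma restricted_eigenvalue_ge_mono:
  "restricted_eigenvalue_ge n p x T cb \<kappa> \<Longrightarrow> \<kappa>' \<le> \<kappa> \<Longrightarrow> restricted_eigenvalue_ge n p x T cb \<kappa>'"
  unfolding restricted_eigenvalue_ge_def by (meson L2_set_nonneg mult_right_mono order_trans)

lemma restricted_eigenvalue_ge_sparse:
  assumes k: "k \<ge> 1" and \<gamma>: "0 \<le> \<gamma>" and \<kappa>: "0 \<le> \<kappa>" and cb: "0 \<le> cb"
    and lower: "\<And>d. d \<in> vecs p \<Longrightarrow> card (supp p d - T) \<le> k \<Longrightarrow> \<kappa> * l2 p d \<le> norm2n n p x d"
    and upper: "\<And>d. d \<in> vecs p \<Longrightarrow> card (supp p d - T) \<le> k \<Longrightarrow> norm2n n p x d \<le> \<gamma> * l2 p d"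
    and T: "T \<subseteq> {..<p}"
  shows "restricted_eigenvalue_ge n p x T cb (\<kappa> - \<gamma> * cb * sqrt (real (card T) / real k))"
  unfolding restricted_eigenvalue_ge_def
proof (intro ballI impI)
  fix \<delta> assume \<delta>: "\<delta> \<in> vecs p" and cone: "(\<Sum>j\<in>{..<p}-T. \<bar>\<delta> j\<bar>) \<le> cb * (\<Sum>j\<in>T. \<bar>\<delta> j\<bar>)"
  define U where "U = {..<p} - T"
  obtain B where B: "B \<subseteq> U" "card B \<le> k"
    and rest: "\<And>j. j \<in> U - B \<Longrightarrow> card B = k \<and> real k * \<bar>\<delta> j\<bar> \<le> (\<Sum>b\<in>B. \<bar>\<delta> b\<bar>)"
    using largest_block[of U k \<delta>] unfolding U_def by blast
  define W where "W = T \<union> B"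
  define R where "R = U - B"
  have W: "W \<subseteq> {..<p}" using T B(1) unfolding W_def U_def by auto
  have "(\<lambda>j. \<delta> j + - restrict_vec R \<delta> j) = restrict_vec W \<delta>"
    using \<delta> unfolding W_def R_def U_def restrict_vec_def vecs_def by (auto simp: fun_eq_iff not_less)
  hence split: "norm2n n p x (restrict_vec W \<delta>) \<le> norm2n n p x \<delta> + norm2n n p x (restrict_vec R \<delta>)"
    using norm2n_triangle[of n p x \<delta> "\<lambda>j. - restrict_vec R \<delta> j"] by (simp add: norm2n_uminus)
  have "finite B" using B(1) unfolding U_def by (rule finite_subset) simp
  hence "card (supp p (restrict_vec W \<delta>) - T) \<le> card B"
    by (rule card_mono) (use supp_restrict_vec_subset[of p W \<delta>] in \<open>auto simp: W_def\<close>)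
  hence "\<kappa> * L2_set \<delta> W \<le> norm2n n p x (restrict_vec W \<delta>)"
    using lower[OF restrict_vec_in_vecs[OF W]] B(2) l2_restrict_vec[OF W] by simp
  moreover have "\<kappa> * L2_set \<delta> T \<le> \<kappa> * L2_set \<delta> W"
    using W \<kappa> finite_subset[OF W] unfolding W_def by (intro mult_left_mono L2_set_subset_le) auto
  ultimately have lower_W: "\<kappa> * L2_set \<delta> T \<le> norm2n n p x (restrict_vec W \<delta>)" by linarith
  define t' where "t' = (\<Sum>b\<in>B. \<bar>\<delta> b\<bar>) / k"
  have R: "R \<subseteq> {..<p} - T" unfolding R_def U_def by blast
  have t': "0 \<le> t'" unfolding t'_def by (simp add: sum_nonneg)
  have bound: "\<bar>\<delta> j\<bar> \<le> t'" if "j \<in> R" for j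
    using rest[of j] that k unfolding R_def t'_def by (simp add: field_simps)
  have "norm2n n p x (restrict_vec R \<delta>) \<le> \<gamma> * (sqrt k * t' + (\<Sum>j\<in>R. \<bar>\<delta> j\<bar>) / sqrt k)"
    using norm2n_restrict_vec_shelling[where T=T and v=\<delta>, OF k \<gamma> upper R t' bound] .
  also have "sqrt k * t' + (\<Sum>j\<in>R. \<bar>\<delta> j\<bar>) / sqrt k = (\<Sum>j\<in>U. \<bar>\<delta> j\<bar>) / sqrt k"
    unfolding t'_def R_def by (rule sum_abs_block_split[OF k B(1)]) (simp add: U_def)
  also have "\<dots> \<le> cb * (sqrt (real (card T)) * L2_set \<delta> T) / sqrt k"
    using cone cb sum_abs_le_sqrt_card_L2_set[of \<delta> T] unfolding U_def
    by (intro divide_right_mono) (auto intro: order_trans mult_left_mono)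
  also have "\<dots> = cb * sqrt (real (card T) / real k) * L2_set \<delta> T"
    by (simp add: real_sqrt_divide)
  finally have "norm2n n p x (restrict_vec R \<delta>) \<le> \<gamma> * cb * sqrt (real (card T) / real k) * L2_set \<delta> T"
    using \<gamma> by (simp add: mult_left_mono mult.assoc)
  thus "(\<kappa> - \<gamma> * cb * sqrt (real (card T) / real k)) * L2_set \<delta> T \<le> norm2n n p x \<delta>"
    using lower_W split by (simp add: left_diff_distrib)
qed

lemma block_size_bounds:
  fixes s :: nat and L :: real
  assumes s: "1 \<le> s" and L: "2 \<le> L"
  defines "k \<equiv> nat \<lfloor>real s * L\<rfloor>"
  shows "1 \<le> k" "real k \<le> real s * L" "real s / real k \<le> 2 / L"
proof -
  have sL: "2 \<le> real s * L" using mult_mono[of 1 "real s" 2 L] s L by simp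
  have k: "real k = of_int \<lfloor>real s * L\<rfloor>" unfolding k_def using sL by simp
  hence half: "real s * L / 2 \<le> real k" using sL by linarith
  thus "1 \<le> k" using sL by linarith
  show "real k \<le> real s * L" unfolding k by simp
  have "real s / real k \<le> real s / (real s * L / 2)"
    using half sL s by (intro divide_left_mono) auto
  also have "\<dots> = 2 / L" using s L by simp
  finally show "real s / real k \<le> 2 / L" .
qed

lemma shelling_error_le:
  fixes \<phi> CR cb r L :: real
  assumes \<phi>: "0 \<le> \<phi>" "\<phi> \<le> CR" and CR: "0 < CR" and cb: "0 \<le> cb"
    and r: "0 \<le> r" "r \<le> 2 / L" and L: "2 \<le> L" "8 * CR ^ 3 * cb\<^sup>2 \<le> L"
  shows "sqrt \<phi> * cb * sqrt r \<le> 1 / (2 * CR)"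
proof -
  have "sqrt \<phi> * cb * sqrt r = sqrt (\<phi> * cb\<^sup>2 * r)"
    using cb by (simp only: real_sqrt_mult real_sqrt_abs abs_of_nonneg)
  also have "\<dots> \<le> sqrt (CR * cb\<^sup>2 * (2 / L))"
    using \<phi> r by (intro real_sqrt_le_mono mult_mono) auto
  also have "\<dots> \<le> sqrt ((1 / (2 * CR))\<^sup>2)"
    using L CR by (intro real_sqrt_le_mono) (simp add: field_simps power2_eq_square power3_eq_cube)
  also have "\<dots> = 1 / (2 * CR)" using CR by simp
  finally show ?thesis .
qed

text \<open>Once \<open>log n\<close> is large, blocks of size \<open>k \<approx> s log n\<close> make the shelling error at most
  half the sparse eigenvalue lower bound.\<close>
lemma restricted_eigenvalue_ge_of_sparse_eigenvalues:
  assumes n: "n \<ge> 1" and nrm: "\<And>j. j < p \<Longrightarrow> En n (\<lambda>i. (x i j)\<^sup>2) = 1"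
    and T: "T \<subseteq> {..<p}" and cb: "0 \<le> cb"
    and kappa: "0 < kappa n p x T (real (card T) * L)" "1 / kappa n p x T (real (card T) * L) \<le> CR"
    and phi: "phi n p x T (real (card T) * L) \<le> CR"
    and L: "2 \<le> L" "8 * CR ^ 3 * cb\<^sup>2 \<le> L"
  shows "restricted_eigenvalue_ge n p x T cb (1 / (2 * CR))"
proof (cases "T = {}")
  case True
  thus ?thesis unfolding restricted_eigenvalue_ge_def by (simp add: norm2n_nonneg)
next
  case False
  define s where "s = card T"
  define m where "m = real s * L"
  define \<kappa> where "\<kappa> = kappa n p x T m"
  define \<phi> where "\<phi> = phi n p x T m"
  define k where "k = nat \<lfloor>real s * L\<rfloor>"
  have CR: "0 < CR" using kappa by (smt (verit) divide_pos_pos)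
  have s: "1 \<le> s" using False T unfolding s_def by (simp add: Suc_le_eq card_gt_0_iff finite_subset)
  note k = block_size_bounds[OF s L(1), folded k_def]
  obtain j where "j \<in> T" "j < p" using False T by blast
  hence "0 \<le> \<phi>" unfolding \<phi>_def m_def using phi_nonneg[OF n nrm] s L by simp
  have sparse: "real (card (supp p d - T)) \<le> m" if "card (supp p d - T) \<le> k" for d
    using that k(2) unfolding m_def by linarith
  have re: "restricted_eigenvalue_ge n p x T cb (\<kappa> - sqrt \<phi> * cb * sqrt (real s / real k))"
    unfolding s_def
  proof (rule restricted_eigenvalue_ge_sparse[OF k(1) _ _ cb _ _ T])
    show "0 \<le> sqrt \<phi>" "0 \<le> \<kappa>" using \<open>0 \<le> \<phi>\<close> kappa(1) unfolding \<kappa>_def m_def s_def by auto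
    show "\<kappa> * l2 p d \<le> norm2n n p x d" "norm2n n p x d \<le> sqrt \<phi> * l2 p d"
      if "d \<in> vecs p" "card (supp p d - T) \<le> k" for d
      using sparse_eigenvalue_bounds[OF n nrm _ that(1) sparse[OF that(2)]] kappa(1)
      unfolding \<kappa>_def \<phi>_def m_def s_def by auto
  qed
  have "sqrt \<phi> * cb * sqrt (real s / real k) \<le> 1 / (2 * CR)"
    using shelling_error_le[OF \<open>0 \<le> \<phi>\<close> _ CR cb _ k(3) L] phi unfolding \<phi>_def m_def s_def by simp
  moreover have "1 / CR \<le> \<kappa>" using kappa CR unfolding \<kappa>_def m_def s_def by (simp add: field_simps)
  ultimately have "1 / (2 * CR) \<le> \<kappa> - sqrt \<phi> * cb * sqrt (real s / real k)" by simp
  with re show ?thesis by (rule restricted_eigenvalue_ge_mono)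
qed

lemma abs_le_linf: "j < p \<Longrightarrow> \<bar>d j\<bar> \<le> linf p d"
  unfolding linf_def by (intro Max_ge) auto

lemma linf_nonneg: "0 \<le> linf p d"
  unfolding linf_def by (rule Max_ge) auto

lemma Qhat_add:
  "Qhat n p x y (\<lambda>j. b j + d j) =
     Qhat n p x y b - 2 * En n (\<lambda>i. (y i - xb x p i b) * xb x p i d) + (norm2n n p x d)\<^sup>2"
proof -
  have "(y i - xb x p i b - xb x p i d)\<^sup>2
      = (y i - xb x p i b)\<^sup>2 - 2 * ((y i - xb x p i b) * xb x p i d) + (xb x p i d)\<^sup>2" for i
    by (simp add: power2_eq_square algebra_simps)
  hence "(\<Sum>i<n. (y i - xb x p i b - xb x p i d)\<^sup>2) = (\<Sum>i<n. (y i - xb x p i b)\<^sup>2)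
      - 2 * (\<Sum>i<n. (y i - xb x p i b) * xb x p i d) + (\<Sum>i<n. (xb x p i d)\<^sup>2)"
    by (simp only: sum.distrib sum_subtractf sum_distrib_left[symmetric])
  thus ?thesis unfolding Qhat_def norm2n_sq En_def xb_add
    by (simp add: diff_divide_distrib add_divide_distrib diff_diff_eq)
qed

lemma En_mult_le: "En n (\<lambda>i. a i * b i) \<le> sqrt (En n (\<lambda>i. (a i)\<^sup>2)) * sqrt (En n (\<lambda>i. (b i)\<^sup>2))"
proof -
  have "(\<Sum>i<n. a i * b i) \<le> (\<Sum>i<n. \<bar>a i\<bar> * \<bar>b i\<bar>)"
    by (rule sum_mono) (simp add: abs_mult[symmetric])
  also have "\<dots> \<le> L2_set a {..<n} * L2_set b {..<n}" by (rule L2_set_mult_ineq)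
  finally show ?thesis unfolding En_def L2_set_def
    by (simp add: real_sqrt_divide divide_right_mono)
qed

lemma En_noise_mult_le: "2 * En n (\<lambda>i. e i * xb x p i d) \<le> linf p (Svec n x e) * l1 p d"
proof -
  have "(\<Sum>i<n. e i * xb x p i d) = (\<Sum>i<n. \<Sum>j<p. d j * (x i j * e i))"
    unfolding xb_def by (simp add: sum_distrib_left mult_ac)
  also have "\<dots> = (\<Sum>j<p. \<Sum>i<n. d j * (x i j * e i))" by (rule sum.swap)
  finally have "2 * En n (\<lambda>i. e i * xb x p i d) = (\<Sum>j<p. d j * Svec n x e j)"
    unfolding En_def Svec_def by (simp add: sum_distrib_left sum_divide_distrib mult_ac)
  also have "\<dots> \<le> (\<Sum>j<p. \<bar>d j\<bar> * linf p (Svec n x e))"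
  proof (rule sum_mono)
    fix j assume "j \<in> {..<p}"
    hence "\<bar>d j\<bar> * \<bar>Svec n x e j\<bar> \<le> \<bar>d j\<bar> * linf p (Svec n x e)"
      by (intro mult_left_mono abs_le_linf) auto
    thus "d j * Svec n x e j \<le> \<bar>d j\<bar> * linf p (Svec n x e)"
      by (metis abs_ge_self abs_mult order_trans)
  qed
  also have "\<dots> = linf p (Svec n x e) * l1 p d" unfolding l1_def by (simp add: sum_distrib_left mult.commute)
  finally show ?thesis .
qed

lemma sum_lessThan_split_supp:
  "(\<Sum>j<p. g j) = (\<Sum>j\<in>supp p b. g j) + (\<Sum>j\<in>{..<p} - supp p b. g j)"
proof -
  have "supp p b \<subseteq> {..<p}" by (auto simp: supp_def)
  from sum.subset_diff[OF this finite_lessThan] show ?thesis by (simp add: add.commute)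
qed

lemma l1_split_supp:
  "l1 p d = (\<Sum>j\<in>supp p b. \<bar>d j\<bar>) + (\<Sum>j\<in>{..<p} - supp p b. \<bar>d j\<bar>)"
  unfolding l1_def by (rule sum_lessThan_split_supp)

lemma l1_diff_le:
  "l1 p b - l1 p b' \<le> (\<Sum>j\<in>supp p b. \<bar>b' j - b j\<bar>) - (\<Sum>j\<in>{..<p} - supp p b. \<bar>b' j - b j\<bar>)"
proof -
  have "l1 p b - l1 p b' = (\<Sum>j\<in>supp p b. \<bar>b j\<bar> - \<bar>b' j\<bar>) + (\<Sum>j\<in>{..<p} - supp p b. \<bar>b j\<bar> - \<bar>b' j\<bar>)"
    unfolding l1_def sum_subtractf[symmetric] by (rule sum_lessThan_split_supp)
  also have "(\<Sum>j\<in>supp p b. \<bar>b j\<bar> - \<bar>b' j\<bar>) \<le> (\<Sum>j\<in>supp p b. \<bar>b' j - b j\<bar>)"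
    by (rule sum_mono) linarith
  also have "(\<Sum>j\<in>{..<p} - supp p b. \<bar>b j\<bar> - \<bar>b' j\<bar>) = - (\<Sum>j\<in>{..<p} - supp p b. \<bar>b' j - b j\<bar>)"
    by (simp add: supp_def sum_negf[symmetric])
  finally show ?thesis by simp
qed

lemma lasso_basic_inequality:
  assumes las: "lasso_sol n p x (\<lambda>i. f i + e i) lam bh" and b0: "b0 \<in> vecs p"
  defines "\<delta> \<equiv> \<lambda>j. bh j - b0 j"
  shows "(norm2n n p x \<delta>)\<^sup>2 \<le> 2 * sqrt (En n (\<lambda>i. (f i - xb x p i b0)\<^sup>2)) * norm2n n p x \<delta>
           + linf p (Svec n x e) * l1 p \<delta> + lam / real n * (l1 p b0 - l1 p bh)"
proof -
  define y where "y = (\<lambda>i. f i + e i)"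
  have opt: "Qhat n p x y bh + lam / real n * l1 p bh \<le> Qhat n p x y b0 + lam / real n * l1 p b0"
    using las b0 unfolding lasso_sol_def y_def by blast
  have "(y i - xb x p i b0) * xb x p i \<delta> = (f i - xb x p i b0) * xb x p i \<delta> + e i * xb x p i \<delta>" for i
    unfolding y_def by (simp add: algebra_simps)
  hence split: "En n (\<lambda>i. (y i - xb x p i b0) * xb x p i \<delta>)
      = En n (\<lambda>i. (f i - xb x p i b0) * xb x p i \<delta>) + En n (\<lambda>i. e i * xb x p i \<delta>)"
    unfolding En_def by (simp only: sum.distrib add_divide_distrib)
  have "Qhat n p x y bh = Qhat n p x y (\<lambda>j. b0 j + \<delta> j)" unfolding \<delta>_def by simp
  also have "\<dots> = Qhat n p x y b0 - 2 * En n (\<lambda>i. (f i - xb x p i b0) * xb x p i \<delta>)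
      - 2 * En n (\<lambda>i. e i * xb x p i \<delta>) + (norm2n n p x \<delta>)\<^sup>2"
    unfolding Qhat_add split by simp
  finally have "(norm2n n p x \<delta>)\<^sup>2 \<le> 2 * En n (\<lambda>i. (f i - xb x p i b0) * xb x p i \<delta>)
      + 2 * En n (\<lambda>i. e i * xb x p i \<delta>) + lam / real n * (l1 p b0 - l1 p bh)"
    using opt by (simp add: algebra_simps)
  moreover have "En n (\<lambda>i. (f i - xb x p i b0) * xb x p i \<delta>)
      \<le> sqrt (En n (\<lambda>i. (f i - xb x p i b0)\<^sup>2)) * norm2n n p x \<delta>"
    unfolding norm2n_def by (rule En_mult_le)
  ultimately show ?thesis using En_noise_mult_le[of n e x p \<delta>] by linarith
qed

lemma basic_inequality_cases:
  fixes N cs A B L c :: real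
  assumes nonneg: "0 \<le> N" "0 \<le> cs" "0 \<le> A" "0 \<le> B" "0 \<le> L" and c: "1 < c"
    and basic: "N\<^sup>2 \<le> 2 * cs * N + L / c * (A + B) + L * (A - B)"
  shows "N \<le> 4 * cs \<or> (N\<^sup>2 \<le> 4 * L * A \<and> B \<le> (c + 1) / (c - 1) * A)"
proof (cases "N \<le> 4 * cs")
  case False
  hence "2 * cs * N \<le> N\<^sup>2 / 2" using nonneg by (simp add: power2_eq_square mult_right_mono)
  with basic have half: "N\<^sup>2 / 2 \<le> L * ((1 + 1 / c) * A - (1 - 1 / c) * B)"
    by (simp add: algebra_simps add_divide_distrib)
  have "0 < N\<^sup>2" using False nonneg by simp
  hence "0 < L * ((1 + 1 / c) * A - (1 - 1 / c) * B)" using half by linarith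
  hence "(1 - 1 / c) * B \<le> (1 + 1 / c) * A" using nonneg by (simp add: zero_less_mult_iff)
  hence "c * ((1 - 1 / c) * B) \<le> c * ((1 + 1 / c) * A)" using c by (intro mult_left_mono) auto
  moreover have "c * ((1 - 1 / c) * B) = (c - 1) * B" "c * ((1 + 1 / c) * A) = (c + 1) * A"
    using c by (simp_all add: field_simps)
  ultimately have "(c - 1) * B \<le> (c + 1) * A" by simp
  hence cone: "B \<le> (c + 1) / (c - 1) * A" using c by (simp add: field_simps)
  have "A / c \<le> A" "B / c \<le> B"
    using nonneg c divide_left_mono[of 1 c A] divide_left_mono[of 1 c B] by simp_all
  moreover have "(1 + 1 / c) * A - (1 - 1 / c) * B = A + A / c - B + B / c" by (simp add: algebra_simps)
  ultimately have "(1 + 1 / c) * A - (1 - 1 / c) * B \<le> 2 * A" by linarith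
  hence "L * ((1 + 1 / c) * A - (1 - 1 / c) * B) \<le> L * (2 * A)" using nonneg by (intro mult_left_mono)
  hence "N\<^sup>2 \<le> 4 * L * A" using half by linarith
  with cone show ?thesis by blast
qed simp

lemma lasso_cone_or_small:
  assumes n: "n \<ge> 1" and las: "lasso_sol n p x (\<lambda>i. f i + e i) lam bh" and b0: "b0 \<in> vecs p"
    and c: "1 < c" and score: "c * real n * linf p (Svec n x e) \<le> lam"
  defines "\<delta> \<equiv> \<lambda>j. bh j - b0 j"
  shows "norm2n n p x \<delta> \<le> 4 * sqrt (En n (\<lambda>i. (f i - xb x p i b0)\<^sup>2)) \<or>
    ((norm2n n p x \<delta>)\<^sup>2 \<le> 4 * (lam / n) * (\<Sum>j\<in>supp p b0. \<bar>\<delta> j\<bar>) \<and>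
     (\<Sum>j\<in>{..<p} - supp p b0. \<bar>\<delta> j\<bar>) \<le> (c + 1) / (c - 1) * (\<Sum>j\<in>supp p b0. \<bar>\<delta> j\<bar>))"
proof -
  define N where "N = norm2n n p x \<delta>"
  define cs where "cs = sqrt (En n (\<lambda>i. (f i - xb x p i b0)\<^sup>2))"
  define A where "A = (\<Sum>j\<in>supp p b0. \<bar>\<delta> j\<bar>)"
  define B where "B = (\<Sum>j\<in>{..<p} - supp p b0. \<bar>\<delta> j\<bar>)"
  define L where "L = lam / n"
  have N: "0 \<le> N" unfolding N_def by (rule norm2n_nonneg)
  have cs: "0 \<le> cs" unfolding cs_def by (simp add: En_nonneg)
  have A: "0 \<le> A" and B: "0 \<le> B" unfolding A_def B_def by (simp_all add: sum_nonneg)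
  have "0 \<le> c * real n * linf p (Svec n x e)" using c by (simp add: linf_nonneg)
  hence L: "0 \<le> L" using score unfolding L_def by simp
  have linf: "linf p (Svec n x e) \<le> L / c"
    using score n c unfolding L_def by (simp add: field_simps)
  have "linf p (Svec n x e) * l1 p \<delta> \<le> L / c * (A + B)"
    unfolding A_def B_def l1_split_supp[of p \<delta> b0] using linf
    by (intro mult_right_mono add_nonneg_nonneg sum_nonneg) auto
  moreover have "L * (l1 p b0 - l1 p bh) \<le> L * (A - B)"
    unfolding A_def B_def \<delta>_def using L l1_diff_le[of p b0 bh] by (rule mult_left_mono[rotated])
  ultimately have "N\<^sup>2 \<le> 2 * cs * N + L / c * (A + B) + L * (A - B)"
    using lasso_basic_inequality[OF las b0] unfolding N_def cs_def L_def \<delta>_def by linarith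
  from basic_inequality_cases[OF N cs A B L c this] show ?thesis
    unfolding N_def cs_def A_def B_def L_def .
qed

lemma sq_le_mult_imp_le:
  fixes N a :: real
  assumes "0 \<le> a" "N\<^sup>2 \<le> a * N"
  shows "N \<le> a"
proof (cases "0 < N")
  case True
  thus ?thesis using assms(2) by (simp add: power2_eq_square mult_le_cancel_right_pos)
qed (use assms(1) in simp)

lemma lasso_error_le_restricted_eigenvalue:
  assumes n: "n \<ge> 1" and las: "lasso_sol n p x (\<lambda>i. f i + e i) lam bh" and b0: "b0 \<in> vecs p"
    and c: "1 < c" and score: "c * real n * linf p (Svec n x e) \<le> lam"
    and re: "restricted_eigenvalue_ge n p x (supp p b0) ((c + 1) / (c - 1)) \<kappa>" and \<kappa>: "0 < \<kappa>"
  shows "norm2n n p x (\<lambda>j. bh j - b0 j)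
     \<le> 4 * sqrt (En n (\<lambda>i. (f i - xb x p i b0)\<^sup>2)) + 4 * sqrt (card (supp p b0)) * (lam / n) / \<kappa>"
proof -
  define \<delta> where "\<delta> = (\<lambda>j. bh j - b0 j)"
  define N where "N = norm2n n p x \<delta>"
  define cs where "cs = sqrt (En n (\<lambda>i. (f i - xb x p i b0)\<^sup>2))"
  define A where "A = (\<Sum>j\<in>supp p b0. \<bar>\<delta> j\<bar>)"
  define a where "a = 4 * sqrt (card (supp p b0)) * (lam / n) / \<kappa>"
  have "0 \<le> c * real n * linf p (Svec n x e)" using c by (simp add: linf_nonneg)
  hence L: "0 \<le> lam / n" using score by simp
  have a: "0 \<le> a" unfolding a_def by (rule divide_nonneg_pos[OF mult_nonneg_nonneg[OF _ L] \<kappa>]) simp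
  have cs: "0 \<le> cs" unfolding cs_def by (simp add: En_nonneg)
  have "N \<le> 4 * cs \<or> (N\<^sup>2 \<le> 4 * (lam / n) * A \<and>
      (\<Sum>j\<in>{..<p} - supp p b0. \<bar>\<delta> j\<bar>) \<le> (c + 1) / (c - 1) * A)"
    using lasso_cone_or_small[OF n las b0 c score] unfolding N_def cs_def A_def \<delta>_def .
  hence "N \<le> 4 * cs + a"
  proof (elim disjE conjE)
    assume "N \<le> 4 * cs"
    with a show ?thesis by linarith
  next
    assume small: "N\<^sup>2 \<le> 4 * (lam / n) * A"
      and cone: "(\<Sum>j\<in>{..<p} - supp p b0. \<bar>\<delta> j\<bar>) \<le> (c + 1) / (c - 1) * A"
    have "\<delta> \<in> vecs p" using las b0 unfolding lasso_sol_def vecs_def \<delta>_def by simp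
    hence "\<kappa> * L2_set \<delta> (supp p b0) \<le> N"
      using re cone unfolding restricted_eigenvalue_ge_def A_def N_def by blast
    hence "L2_set \<delta> (supp p b0) \<le> N / \<kappa>" using \<kappa> by (simp add: pos_le_divide_eq mult.commute)
    hence "A \<le> sqrt (card (supp p b0)) * (N / \<kappa>)"
      using sum_abs_le_sqrt_card_L2_set[of \<delta> "supp p b0"] unfolding A_def
      by (meson mult_left_mono order_trans real_sqrt_ge_zero of_nat_0_le_iff)
    hence "4 * (lam / n) * A \<le> 4 * (lam / n) * (sqrt (card (supp p b0)) * (N / \<kappa>))"
      using L by (intro mult_left_mono) simp_all
    also have "\<dots> = a * N" unfolding a_def by simp
    finally have "N \<le> a" using small by (intro sq_le_mult_imp_le[OF a]) simp
    with cs show ?thesis by linarith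
  qed
  thus ?thesis unfolding N_def cs_def \<delta>_def a_def .
qed

abbreviation std_normal :: "real measure" where
  "std_normal \<equiv> density lborel (\<lambda>u. ennreal (std_normal_density u))"

lemma prob_space_std_normal: "prob_space std_normal"
  by (rule prob_space_normal_density) simp

lemma Phi_conv_measure: "Phi t = measure std_normal {..t}"
  unfolding Phi_def ..

lemma std_normal_density_mult_exp:
  "std_normal_density x * exp (u * x - u\<^sup>2) = exp (- u\<^sup>2 / 2) * normal_density u 1 x"
proof -
  have "exp (- x\<^sup>2 / 2) * exp (u * x - u\<^sup>2) = exp (- u\<^sup>2 / 2) * exp (- (x - u)\<^sup>2 / 2)"
    unfolding exp_add[symmetric] by (simp add: power2_eq_square algebra_simps)
  thus ?thesis unfolding normal_density_def by simp
qed

lemma nn_integral_normal_density_1: "(\<integral>\<^sup>+x. ennreal (normal_density \<mu> 1 x) \<partial>lborel) = 1"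
proof -
  interpret prob_space "density lborel (normal_density \<mu> 1)" by (rule prob_space_normal_density) simp
  have "emeasure (density lborel (normal_density \<mu> 1)) UNIV = 1" using emeasure_space_1 by simp
  thus ?thesis by (subst (asm) emeasure_density) auto
qed

text \<open>Chernoff bound: tilting by \<open>exp (u x - u\<^sup>2)\<close> turns the standard normal density into
  \<open>exp (- u\<^sup>2 / 2)\<close> times the density of \<open>N(u, 1)\<close>.\<close>
lemma std_normal_measure_le_exp:
  assumes S: "S \<in> sets borel" and uS: "\<And>x. x \<in> S \<Longrightarrow> u\<^sup>2 \<le> u * x"
  shows "measure std_normal S \<le> exp (- u\<^sup>2 / 2)"
proof -
  have "emeasure std_normal S = (\<integral>\<^sup>+x. ennreal (std_normal_density x) * indicator S x \<partial>lborel)"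
    by (rule emeasure_density) (use S in auto)
  also have "\<dots> \<le> (\<integral>\<^sup>+x. ennreal (exp (- u\<^sup>2 / 2)) * ennreal (normal_density u 1 x) \<partial>lborel)"
  proof (rule nn_integral_mono)
    fix x
    have "std_normal_density x * indicator S x \<le> std_normal_density x * exp (u * x - u\<^sup>2)"
    proof (cases "x \<in> S")
      case True
      hence "0 \<le> u * x - u\<^sup>2" using uS by simp
      hence "1 \<le> exp (u * x - u\<^sup>2)" by simp
      hence "std_normal_density x * 1 \<le> std_normal_density x * exp (u * x - u\<^sup>2)"
        by (rule mult_left_mono) simp
      thus ?thesis using True by simp
    next
      case False thus ?thesis by simp
    qed
    also have "\<dots> = exp (- u\<^sup>2 / 2) * normal_density u 1 x" by (rule std_normal_density_mult_exp)
    finally have "std_normal_density x * indicator S x \<le> exp (- u\<^sup>2 / 2) * normal_density u 1 x" .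
    hence "ennreal (std_normal_density x * indicator S x) \<le> ennreal (exp (- u\<^sup>2 / 2) * normal_density u 1 x)"
      by (rule ennreal_leI)
    thus "ennreal (std_normal_density x) * indicator S x \<le> ennreal (exp (- u\<^sup>2 / 2)) * ennreal (normal_density u 1 x)"
      by (cases "x \<in> S") (auto simp: ennreal_mult[symmetric])
  qed
  also have "\<dots> = ennreal (exp (- u\<^sup>2 / 2)) * (\<integral>\<^sup>+x. ennreal (normal_density u 1 x) \<partial>lborel)"
    by (rule nn_integral_cmult) auto
  also have "\<dots> = ennreal (exp (- u\<^sup>2 / 2))" by (simp add: nn_integral_normal_density_1)
  finally have "emeasure std_normal S \<le> ennreal (exp (- u\<^sup>2 / 2))" .
  moreover have "emeasure std_normal S = ennreal (measure std_normal S)"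
    using finite_measure.emeasure_eq_measure[OF prob_space.finite_measure[OF prob_space_std_normal]] .
  ultimately show ?thesis by simp
qed

lemma Phi_upper_tail:
  assumes "0 \<le> t"
  shows "1 - Phi t \<le> exp (- t\<^sup>2 / 2)"
proof -
  have "1 - Phi t = measure std_normal (space std_normal - {..t})"
    unfolding Phi_conv_measure using prob_space.prob_compl[OF prob_space_std_normal, of "{..t}"] by simp
  also have "space std_normal - {..t} = {t<..}" by auto
  also have "measure std_normal {t<..} \<le> exp (- t\<^sup>2 / 2)"
    by (rule std_normal_measure_le_exp) (use assms in \<open>auto simp: power2_eq_square intro: mult_left_mono\<close>)
  finally show ?thesis .
qed

lemma Phi_lower_tail:
  assumes "t \<le> 0"
  shows "Phi t \<le> exp (- t\<^sup>2 / 2)"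
  unfolding Phi_conv_measure
proof (rule std_normal_measure_le_exp)
  fix x :: real assume "x \<in> {..t}"
  hence "t * t \<le> t * x" using assms by (intro mult_left_mono_neg) auto
  thus "t\<^sup>2 \<le> t * x" by (simp add: power2_eq_square)
qed simp

lemma quantile_attained:
  fixes V :: "'a \<Rightarrow> real"
  assumes M: "finite_measure M" and V: "V \<in> borel_measurable M"
    and t: "q \<le> measure M {\<omega>\<in>space M. V \<omega> \<le> t}"
    and bdd: "bdd_below {t. q \<le> measure M {\<omega>\<in>space M. V \<omega> \<le> t}}"
  shows "q \<le> measure M {\<omega>\<in>space M. V \<omega> \<le> Inf {t. q \<le> measure M {\<omega>\<in>space M. V \<omega> \<le> t}}}"
proof -
  interpret finite_measure M by (rule M)
  define F where "F t = measure M {\<omega>\<in>space M. V \<omega> \<le> t}" for t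
  define a where "a = Inf {t. q \<le> F t}"
  interpret D: finite_borel_measure "distr M borel V"
    by (intro finite_borel_measure.intro finite_measure_distr V) (simp add: finite_borel_measure_axioms_def)
  have "F = cdf (distr M borel V)"
    using V by (auto simp: fun_eq_iff F_def cdf_def measure_distr vimage_def Int_def conj_commute)
  hence "(F \<longlongrightarrow> F a) (at_right a)"
    using D.cdf_is_right_cont[of a] by (simp add: continuous_within)
  moreover have "q \<le> F s" if "a < s" for s
  proof -
    obtain r where r: "q \<le> F r" "r < s"
      using \<open>a < s\<close> cInf_less_iff[of "{t. q \<le> F t}" s] t bdd unfolding a_def F_def by auto
    have "F r \<le> F s" unfolding F_def using r(2) V by (intro finite_measure_mono) auto
    thus ?thesis using r(1) by simp
  qed
  hence "eventually (\<lambda>s. q \<le> F s) (at_right a)"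
    by (auto simp: eventually_at_right_field intro: exI[of _ "a + 1"])
  ultimately have "q \<le> F a" by (intro tendsto_lowerbound) auto
  thus ?thesis unfolding a_def F_def .
qed

lemma bdd_below_Phi_ge:
  assumes q: "0 < q" "q \<le> 1"
  shows "bdd_below {t. q \<le> Phi t}"
proof (rule bdd_belowI[of _ "- sqrt (2 * ln (1 / q))"])
  fix t assume "t \<in> {t. q \<le> Phi t}"
  hence qt: "q \<le> Phi t" by simp
  show "- sqrt (2 * ln (1 / q)) \<le> t"
  proof (cases "0 \<le> t")
    case True
    moreover have "0 \<le> sqrt (2 * ln (1 / q))" using q by simp
    ultimately show ?thesis by linarith
  next
    case False
    hence "q \<le> exp (- t\<^sup>2 / 2)" using qt Phi_lower_tail[of t] by simp
    hence "ln q \<le> - t\<^sup>2 / 2" using q by (metis ln_exp ln_le_cancel_iff exp_gt_zero)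
    hence "t\<^sup>2 \<le> 2 * ln (1 / q)" using q by (simp add: ln_div)
    hence "sqrt (t\<^sup>2) \<le> sqrt (2 * ln (1 / q))" by (rule real_sqrt_le_mono)
    thus ?thesis using False by simp
  qed
qed

lemma Phi_Phi_inv:
  assumes q: "0 < q" "q \<le> 1" and t: "q \<le> Phi t"
  shows "q \<le> Phi (Phi_inv q)"
proof -
  have Phi: "measure std_normal {\<omega>\<in>space std_normal. \<omega> \<le> s} = Phi s" for s
    unfolding Phi_conv_measure by (simp add: atMost_def)
  have "q \<le> measure std_normal {\<omega>\<in>space std_normal. \<omega> \<le>
           Inf {s. q \<le> measure std_normal {\<omega>\<in>space std_normal. \<omega> \<le> s}}}"
    by (rule quantile_attained[OF prob_space.finite_measure[OF prob_space_std_normal], where t=t])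
      (use t bdd_below_Phi_ge[OF q] in \<open>simp_all add: Phi_conv_measure[symmetric] atMost_def[symmetric]\<close>)
  thus ?thesis unfolding Phi_inv_def Phi .
qed

lemma distributed_weighted_sum_normal:
  fixes n :: nat and a :: "nat \<Rightarrow> real"
  assumes P: "prob_space M" and s0: "0 < \<sigma>"
    and ind: "prob_space.indep_vars M (\<lambda>_. borel) \<epsilon> {..<n}"
    and nrm: "\<And>i. i < n \<Longrightarrow> distributed M lborel (\<epsilon> i) (\<lambda>t. ennreal (normal_density 0 \<sigma> t))"
    and av: "(\<Sum>i<n. (a i)\<^sup>2) = v" and v0: "0 < v"
  shows "distributed M lborel (\<lambda>\<omega>. \<Sum>i<n. a i * \<epsilon> i \<omega>) (\<lambda>t. ennreal (normal_density 0 (\<sigma> * sqrt v) t))"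
proof -
  interpret prob_space M by (rule P)
  \<comment> \<open>\<open>sum_indep_normal\<close> needs positive variances, so the terms with \<open>a i = 0\<close> are dropped.\<close>
  define I where "I = {i. i < n \<and> a i \<noteq> 0}"
  have fI: "finite I" unfolding I_def by simp
  have In: "I \<subseteq> {..<n}" unfolding I_def by auto
  have sumI: "\<And>g. (\<Sum>i<n. a i * g i) = (\<Sum>i\<in>I. a i * g i)"
    by (rule sum.mono_neutral_right) (auto simp: I_def)
  have sumI2: "(\<Sum>i<n. (a i)\<^sup>2) = (\<Sum>i\<in>I. (a i)\<^sup>2)"
    by (rule sum.mono_neutral_right) (auto simp: I_def)
  have Ine: "I \<noteq> {}"
  proof
    assume "I = {}" hence "(\<Sum>i<n. (a i)\<^sup>2) = 0" using sumI2 by simp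
    thus False using av v0 by simp
  qed
  have ind2: "indep_vars (\<lambda>_. borel) (\<lambda>i \<omega>. a i * \<epsilon> i \<omega>) I"
    using indep_vars_compose2[OF indep_vars_subset[OF ind In], where Y="\<lambda>i t. a i * t" and N="\<lambda>_. borel"]
    by simp
  have nd: "distributed M lborel (\<lambda>\<omega>. a i * \<epsilon> i \<omega>) (normal_density 0 (\<bar>a i\<bar> * \<sigma>))" if "i \<in> I" for i
  proof -
    have "i < n" "a i \<noteq> 0" using that unfolding I_def by auto
    from normal_density_affine[OF nrm[OF \<open>i < n\<close>] s0 \<open>a i \<noteq> 0\<close>, of 0]
    show ?thesis by simp
  qed
  have "distributed M lborel (\<lambda>\<omega>. \<Sum>i\<in>I. a i * \<epsilon> i \<omega>)
      (normal_density (\<Sum>i\<in>I. 0) (sqrt (\<Sum>i\<in>I. (\<bar>a i\<bar> * \<sigma>)\<^sup>2)))"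
    by (rule sum_indep_normal[OF fI Ine ind2]) (use s0 nd in \<open>auto simp: I_def\<close>)
  moreover have "(\<Sum>i\<in>I. (\<bar>a i\<bar> * \<sigma>)\<^sup>2) = \<sigma>\<^sup>2 * v"
    unfolding av[symmetric] sumI2 by (simp add: power_mult_distrib sum_distrib_left mult.commute)
  moreover have "sqrt (\<sigma>\<^sup>2 * v) = \<sigma> * sqrt v" using s0 by (simp add: real_sqrt_mult)
  ultimately show ?thesis using sumI by simp
qed

lemma weighted_sum_normal_tail:
  fixes n :: nat and a :: "nat \<Rightarrow> real"
  assumes P: "prob_space M" and s0: "0 < \<sigma>"
    and ind: "prob_space.indep_vars M (\<lambda>_. borel) \<epsilon> {..<n}"
    and nrm: "\<And>i. i < n \<Longrightarrow> distributed M lborel (\<epsilon> i) (\<lambda>t. ennreal (normal_density 0 \<sigma> t))"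
    and av: "(\<Sum>i<n. (a i)\<^sup>2) = v" and v0: "0 < v"
  shows "measure M {\<omega>\<in>space M. \<sigma> * sqrt v * u < (\<Sum>i<n. a i * \<epsilon> i \<omega>)} = 1 - Phi u"
proof -
  interpret prob_space M by (rule P)
  define Z where "Z = (\<lambda>\<omega>. \<Sum>i<n. a i * \<epsilon> i \<omega>)"
  have sv: "0 < \<sigma> * sqrt v" using s0 v0 by simp
  have "distributed M lborel Z (\<lambda>t. ennreal (normal_density 0 (\<sigma> * sqrt v) t))"
    unfolding Z_def by (rule distributed_weighted_sum_normal[OF P s0 ind nrm av v0])
  hence W: "distributed M lborel (\<lambda>\<omega>. (Z \<omega> - 0) / (\<sigma> * sqrt v)) std_normal_density"
    using normal_standard_normal_convert[OF sv] by simp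
  have eq: "{\<omega>\<in>space M. \<sigma> * sqrt v * u < Z \<omega>} = (\<lambda>\<omega>. (Z \<omega> - 0) / (\<sigma> * sqrt v)) -` {u<..} \<inter> space M"
    using sv by (auto simp: field_simps)
  have "emeasure M {\<omega>\<in>space M. \<sigma> * sqrt v * u < Z \<omega>}
      = (\<integral>\<^sup>+x. ennreal (std_normal_density x) * indicator {u<..} x \<partial>lborel)"
    unfolding eq by (rule distributed_emeasure[OF W]) simp
  also have "\<dots> = emeasure std_normal {u<..}" by (rule emeasure_density[symmetric]) auto
  finally have "measure M {\<omega>\<in>space M. \<sigma> * sqrt v * u < Z \<omega>} = measure std_normal {u<..}"
    by (simp add: measure_def)
  also have "\<dots> = measure std_normal (space std_normal - {..u})" by (simp add: Compl_eq_Diff_UNIV[symmetric] Compl_atMost)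
  also have "\<dots> = 1 - Phi u" unfolding Phi_conv_measure by (rule prob_space.prob_compl[OF prob_space_std_normal]) simp
  finally show ?thesis unfolding Z_def .
qed

lemma linf_le_iff: "linf p d \<le> t \<longleftrightarrow> 0 \<le> t \<and> (\<forall>j<p. \<bar>d j\<bar> \<le> t)"
  unfolding linf_def by (auto simp: Max_le_iff)

lemma linf_Svec_le:
  assumes n: "n \<ge> 1" and t: "0 \<le> t" and bound: "\<And>j. j < p \<Longrightarrow> \<bar>\<Sum>i<n. x i j * e i\<bar> \<le> t"
  shows "real n * linf p (Svec n x e) \<le> 2 * t"
proof -
  have "\<bar>Svec n x e j\<bar> \<le> 2 * t / real n" if "j < p" for j
  proof -
    have "\<bar>Svec n x e j\<bar> = 2 * \<bar>\<Sum>i<n. x i j * e i\<bar> / real n"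
      unfolding Svec_def En_def by (simp add: abs_mult)
    also have "\<dots> \<le> 2 * t / real n" using bound[OF that] by (simp add: divide_right_mono)
    finally show ?thesis .
  qed
  hence "linf p (Svec n x e) \<le> 2 * t / real n" using t by (simp add: linf_le_iff)
  hence "real n * linf p (Svec n x e) \<le> real n * (2 * t / real n)" by (rule mult_left_mono) simp
  thus ?thesis using n by simp
qed

lemma scaled_linf_Svec_le_iff:
  assumes n: "n \<ge> 1" and \<sigma>: "0 < \<sigma>"
  shows "real n * linf p (\<lambda>j. Svec n x e j / (2 * \<sigma>)) \<le> t \<longleftrightarrow>
         0 \<le> t \<and> (\<forall>j<p. \<bar>\<Sum>i<n. x i j * e i\<bar> \<le> \<sigma> * sqrt (real n) * (t / sqrt (real n)))"
proof -
  have rn: "0 < real n" using n by simp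
  have "(real n * linf p (\<lambda>j. Svec n x e j / (2 * \<sigma>)) \<le> t) \<longleftrightarrow>
        linf p (\<lambda>j. Svec n x e j / (2 * \<sigma>)) \<le> t / real n"
    using rn by (simp add: field_simps)
  also have "\<dots> \<longleftrightarrow> 0 \<le> t / real n \<and> (\<forall>j<p. \<bar>Svec n x e j / (2 * \<sigma>)\<bar> \<le> t / real n)"
    by (rule linf_le_iff)
  also have "\<dots> \<longleftrightarrow> 0 \<le> t \<and> (\<forall>j<p. \<bar>\<Sum>i<n. x i j * e i\<bar> \<le> \<sigma> * t)"
  proof -
    have "\<bar>Svec n x e j / (2 * \<sigma>)\<bar> \<le> t / real n \<longleftrightarrow> \<bar>\<Sum>i<n. x i j * e i\<bar> \<le> \<sigma> * t" for j
    proof -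
      have ns: "0 < real n * \<sigma>" using rn \<sigma> by simp
      have "\<bar>Svec n x e j / (2 * \<sigma>)\<bar> = \<bar>\<Sum>i<n. x i j * e i\<bar> / (real n * \<sigma>)"
        unfolding Svec_def En_def using \<sigma> by (simp add: abs_div abs_mult)
      also have "\<dots> \<le> t / real n \<longleftrightarrow> \<bar>\<Sum>i<n. x i j * e i\<bar> \<le> t / real n * (real n * \<sigma>)"
        by (rule pos_divide_le_eq[OF ns])
      also have "t / real n * (real n * \<sigma>) = \<sigma> * t" using rn by simp
      finally show ?thesis .
    qed
    thus ?thesis using rn by (simp add: zero_le_divide_iff)
  qed
  finally show ?thesis using rn by (simp add: mult.assoc)
qed

definition tail_threshold :: "nat \<Rightarrow> real \<Rightarrow> real" where
  "tail_threshold p \<alpha> = sqrt (2 * ln (2 * real p / \<alpha>))"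

lemma tail_threshold_bounds:
  assumes \<alpha>: "0 < \<alpha>" "\<alpha> < 1" and p: "p \<ge> 2"
  shows "0 \<le> tail_threshold p \<alpha>" and "1 - Phi (tail_threshold p \<alpha>) \<le> \<alpha> / (2 * real p)"
proof -
  have "1 < 2 * real p / \<alpha>" using \<alpha> p by (simp add: field_simps)
  hence ln: "0 \<le> ln (2 * real p / \<alpha>)" by simp
  thus nonneg: "0 \<le> tail_threshold p \<alpha>" unfolding tail_threshold_def by simp
  have "- (tail_threshold p \<alpha>)\<^sup>2 / 2 = ln (\<alpha> / (2 * real p))"
    unfolding tail_threshold_def using ln \<alpha> p by (simp add: ln_div)
  hence "exp (- (tail_threshold p \<alpha>)\<^sup>2 / 2) = \<alpha> / (2 * real p)" using \<alpha> p by simp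
  thus "1 - Phi (tail_threshold p \<alpha>) \<le> \<alpha> / (2 * real p)" using Phi_upper_tail[OF nonneg] by simp
qed

lemma tail_threshold_le:
  assumes \<alpha>: "0 < \<alpha>" "\<alpha> < 1" and p: "p \<ge> 2" and C: "ln (1 / \<alpha>) \<le> C * ln (real p)"
  shows "tail_threshold p \<alpha> \<le> sqrt (2 * (2 + \<bar>C\<bar>)) * sqrt (ln (real p))"
proof -
  have lp: "ln 2 \<le> ln (real p)" "0 \<le> ln (real p)" using p by simp_all
  have "ln (2 * real p / \<alpha>) = ln 2 + ln (real p) + ln (1 / \<alpha>)"
    using \<alpha> p by (simp add: ln_div ln_mult)
  also have "\<dots> \<le> ln (real p) + ln (real p) + \<bar>C\<bar> * ln (real p)"
    using lp C by (smt (verit) abs_ge_self mult_right_mono)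
  finally have "2 * ln (2 * real p / \<alpha>) \<le> 2 * (2 + \<bar>C\<bar>) * ln (real p)" by (simp add: algebra_simps)
  hence "tail_threshold p \<alpha> \<le> sqrt (2 * (2 + \<bar>C\<bar>) * ln (real p))"
    unfolding tail_threshold_def by (rule real_sqrt_le_mono)
  thus ?thesis by (simp add: real_sqrt_mult)
qed

lemma Phi_inv_le_tail_threshold:
  assumes \<alpha>: "0 < \<alpha>" "\<alpha> < 1" and p: "p \<ge> 2"
  shows "Phi_inv (1 - \<alpha> / (2 * real p)) \<le> tail_threshold p \<alpha>"
proof -
  have q: "0 < 1 - \<alpha> / (2 * real p)" "1 - \<alpha> / (2 * real p) \<le> 1"
    using \<alpha> p by (simp_all add: field_simps)
  have "1 - \<alpha> / (2 * real p) \<le> Phi (tail_threshold p \<alpha>)" using tail_threshold_bounds(2)[OF \<alpha> p] by simp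
  thus ?thesis unfolding Phi_inv_def by (intro cInf_lower bdd_below_Phi_ge[OF q]) simp
qed

context
  fixes M :: "'a measure" and n p :: nat and x :: "nat \<Rightarrow> nat \<Rightarrow> real" and \<sigma> :: real
    and \<epsilon> :: "nat \<Rightarrow> 'a \<Rightarrow> real"
  assumes prob: "prob_space M" and \<sigma>: "0 < \<sigma>"
    and indep: "prob_space.indep_vars M (\<lambda>_. borel) \<epsilon> {..<n}"
    and normal: "\<And>i. i < n \<Longrightarrow> distributed M lborel (\<epsilon> i) (\<lambda>t. ennreal (normal_density 0 \<sigma> t))"
    and n: "n \<ge> 1" and col: "\<And>j. j < p \<Longrightarrow> (\<Sum>i<n. (x i j)\<^sup>2) = real n"
begin

lemma score_measurable: "(\<lambda>\<omega>. \<Sum>i<n. a i * \<epsilon> i \<omega>) \<in> borel_measurable M"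
proof (rule borel_measurable_sum)
  fix i assume "i \<in> {..<n}"
  thus "(\<lambda>\<omega>. a i * \<epsilon> i \<omega>) \<in> borel_measurable M"
    using distributed_measurable[OF normal[of i]] by (simp add: measurable_lborel2)
qed

lemma prob_abs_score_gt:
  assumes "j < p"
  shows "measure M {\<omega>\<in>space M. \<sigma> * sqrt n * u < \<bar>\<Sum>i<n. x i j * \<epsilon> i \<omega>\<bar>} \<le> 2 * (1 - Phi u)"
proof -
  interpret prob_space M by (rule prob)
  define Up where "Up = {\<omega>\<in>space M. \<sigma> * sqrt n * u < (\<Sum>i<n. x i j * \<epsilon> i \<omega>)}"
  define Dn where "Dn = {\<omega>\<in>space M. \<sigma> * sqrt n * u < (\<Sum>i<n. (- x i j) * \<epsilon> i \<omega>)}"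
  have sets: "Up \<in> sets M" "Dn \<in> sets M" unfolding Up_def Dn_def using score_measurable by measurable
  have "(\<Sum>i<n. (- x i j)\<^sup>2) = real n" using col[OF assms] by simp
  from weighted_sum_normal_tail[OF prob \<sigma> indep normal this] n
  have "measure M Dn = 1 - Phi u" unfolding Dn_def by simp
  moreover from weighted_sum_normal_tail[OF prob \<sigma> indep normal col[OF assms]] n
  have "measure M Up = 1 - Phi u" unfolding Up_def by simp
  moreover have "{\<omega>\<in>space M. \<sigma> * sqrt n * u < \<bar>\<Sum>i<n. x i j * \<epsilon> i \<omega>\<bar>} = Up \<union> Dn"
    unfolding Up_def Dn_def by (auto simp: sum_negf abs_if)
  ultimately show ?thesis using measure_Un_le[OF sets] by simp
qed

lemma prob_max_score_le:
  shows "{\<omega>\<in>space M. \<forall>j<p. \<bar>\<Sum>i<n. x i j * \<epsilon> i \<omega>\<bar> \<le> \<sigma> * sqrt n * u} \<in> sets M"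
    and "1 - 2 * real p * (1 - Phi u) \<le>
         measure M {\<omega>\<in>space M. \<forall>j<p. \<bar>\<Sum>i<n. x i j * \<epsilon> i \<omega>\<bar> \<le> \<sigma> * sqrt n * u}"
proof -
  interpret prob_space M by (rule prob)
  define Bad where "Bad j = {\<omega>\<in>space M. \<sigma> * sqrt n * u < \<bar>\<Sum>i<n. x i j * \<epsilon> i \<omega>\<bar>}" for j
  have sets: "Bad j \<in> sets M" for j unfolding Bad_def using score_measurable by measurable
  have good: "{\<omega>\<in>space M. \<forall>j<p. \<bar>\<Sum>i<n. x i j * \<epsilon> i \<omega>\<bar> \<le> \<sigma> * sqrt n * u} = space M - (\<Union>j<p. Bad j)"
    unfolding Bad_def by (auto simp: not_less)
  show "{\<omega>\<in>space M. \<forall>j<p. \<bar>\<Sum>i<n. x i j * \<epsilon> i \<omega>\<bar> \<le> \<sigma> * sqrt n * u} \<in> sets M"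
    unfolding good using sets by auto
  have "measure M (\<Union>j<p. Bad j) \<le> (\<Sum>j<p. measure M (Bad j))"
    using sets by (intro finite_measure_subadditive_finite) auto
  also have "\<dots> \<le> (\<Sum>j<p. 2 * (1 - Phi u))"
    unfolding Bad_def by (intro sum_mono prob_abs_score_gt) simp
  also have "\<dots> = 2 * real p * (1 - Phi u)" by simp
  finally have "measure M (\<Union>j<p. Bad j) \<le> 2 * real p * (1 - Phi u)" .
  moreover have "measure M (space M - (\<Union>j<p. Bad j)) = 1 - measure M (\<Union>j<p. Bad j)"
    using sets by (intro prob_compl) auto
  ultimately show "1 - 2 * real p * (1 - Phi u) \<le>
      measure M {\<omega>\<in>space M. \<forall>j<p. \<bar>\<Sum>i<n. x i j * \<epsilon> i \<omega>\<bar> \<le> \<sigma> * sqrt n * u}"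
    unfolding good by linarith
qed

lemma Phi_inv_penalty_event:
  assumes \<alpha>: "0 < \<alpha>" "\<alpha> < 1" and p: "p \<ge> 2"
  shows "\<exists>A\<in>sets M. 1 - \<alpha> \<le> measure M A \<and> (\<forall>\<omega>\<in>A.
    real n * linf p (Svec n x (\<lambda>i. \<epsilon> i \<omega>)) \<le> 2 * \<sigma> * sqrt n * Phi_inv (1 - \<alpha> / (2 * real p)))"
proof -
  define q where "q = 1 - \<alpha> / (2 * real p)"
  define u where "u = Phi_inv q"
  define A where "A = {\<omega>\<in>space M. \<forall>j<p. \<bar>\<Sum>i<n. x i j * \<epsilon> i \<omega>\<bar> \<le> \<sigma> * sqrt n * u}"
  have q: "0 < q" "q \<le> 1" unfolding q_def using \<alpha> p by (simp_all add: field_simps)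
  have "q \<le> Phi (tail_threshold p \<alpha>)" using tail_threshold_bounds(2)[OF \<alpha> p] unfolding q_def by simp
  hence "q \<le> Phi u" unfolding u_def by (rule Phi_Phi_inv[OF q])
  hence "2 * real p * (1 - Phi u) \<le> 2 * real p * (1 - q)" by (intro mult_left_mono) auto
  also have "2 * real p * (1 - q) = \<alpha>" unfolding q_def using p by simp
  finally have measure_A: "1 - \<alpha> \<le> measure M A" using prob_max_score_le(2)[of u] unfolding A_def by linarith
  have "A \<in> sets M" unfolding A_def by (rule prob_max_score_le(1))
  show ?thesis
  proof (intro bexI[OF _ \<open>A \<in> sets M\<close>] conjI ballI measure_A)
    fix \<omega> assume "\<omega> \<in> A"
    hence bound: "\<bar>\<Sum>i<n. x i j * \<epsilon> i \<omega>\<bar> \<le> \<sigma> * sqrt n * u" if "j < p" for j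
      using that unfolding A_def by blast
    have "0 \<le> \<sigma> * sqrt n * u" using order_trans[OF abs_ge_zero bound[of 0]] p by simp
    from linf_Svec_le[OF n this bound]
    show "real n * linf p (Svec n x (\<lambda>i. \<epsilon> i \<omega>)) \<le> 2 * \<sigma> * sqrt n * Phi_inv (1 - \<alpha> / (2 * real p))"
      unfolding u_def q_def by (simp add: mult.assoc)
  qed
qed

lemma Lambda_q_penalty_event:
  assumes \<alpha>: "0 < \<alpha>" "\<alpha> < 1" and p: "p \<ge> 2"
  shows "Lambda_q M n p x \<sigma> \<epsilon> (1 - \<alpha>) \<le> sqrt n * tail_threshold p \<alpha>"
    and "\<exists>A\<in>sets M. 1 - \<alpha> \<le> measure M A \<and>
      (\<forall>\<omega>\<in>A. real n * linf p (Svec n x (\<lambda>i. \<epsilon> i \<omega>)) \<le> 2 * \<sigma> * Lambda_q M n p x \<sigma> \<epsilon> (1 - \<alpha>))"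
proof -
  interpret prob_space M by (rule prob)
  define V where "V = (\<lambda>\<omega>. real n * linf p (\<lambda>j. Svec n x (\<lambda>i. \<epsilon> i \<omega>) j / (2 * \<sigma>)))"
  define G where "G = (\<lambda>u. {\<omega>\<in>space M. \<forall>j<p. \<bar>\<Sum>i<n. x i j * \<epsilon> i \<omega>\<bar> \<le> \<sigma> * sqrt n * u})"
  define S where "S = {t. 1 - \<alpha> \<le> measure M {\<omega>\<in>space M. V \<omega> \<le> t}}"
  define t0 where "t0 = tail_threshold p \<alpha>"
  have Lambda: "Lambda_q M n p x \<sigma> \<epsilon> (1 - \<alpha>) = Inf S" unfolding Lambda_q_def S_def V_def ..
  have sublevel: "{\<omega>\<in>space M. V \<omega> \<le> t} = (if 0 \<le> t then G (t / sqrt n) else {})" for t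
    unfolding V_def G_def scaled_linf_Svec_le_iff[OF n \<sigma>] by auto
  have G: "G u \<in> sets M" "1 - 2 * real p * (1 - Phi u) \<le> measure M (G u)" for u
    unfolding G_def by (rule prob_max_score_le)+
  have V: "V \<in> borel_measurable M"
    unfolding borel_measurable_iff_le sublevel using G(1) by simp
  have "2 * real p * (1 - Phi t0) \<le> 2 * real p * (\<alpha> / (2 * real p))"
    using tail_threshold_bounds(2)[OF \<alpha> p] unfolding t0_def by (intro mult_left_mono) auto
  hence "1 - \<alpha> \<le> measure M (G t0)" using G(2)[of t0] p by simp
  hence t1: "sqrt n * t0 \<in> S"
    unfolding S_def sublevel using tail_threshold_bounds(1)[OF \<alpha> p] n by (simp add: t0_def)
  have bdd: "bdd_below S"
  proof (rule bdd_belowI)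
    fix t assume "t \<in> S"
    thus "0 \<le> t" using \<alpha> unfolding S_def sublevel by (cases "0 \<le> t") simp_all
  qed
  show "Lambda_q M n p x \<sigma> \<epsilon> (1 - \<alpha>) \<le> sqrt n * tail_threshold p \<alpha>"
    unfolding Lambda t0_def[symmetric] by (rule cInf_lower[OF t1 bdd])
  have "1 - \<alpha> \<le> measure M {\<omega>\<in>space M. V \<omega> \<le> Inf S}"
    using quantile_attained[OF finite_measure V, where q="1 - \<alpha>" and t="sqrt n * t0"] t1 bdd
    unfolding S_def by simp
  moreover have "real n * linf p (Svec n x (\<lambda>i. \<epsilon> i \<omega>)) \<le> 2 * \<sigma> * Inf S"
    if "\<omega> \<in> {\<omega>\<in>space M. V \<omega> \<le> Inf S}" for \<omega>
  proof -
    have "0 \<le> Inf S" and bound: "\<And>j. j < p \<Longrightarrow> \<bar>\<Sum>i<n. x i j * \<epsilon> i \<omega>\<bar> \<le> \<sigma> * Inf S"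
      using that n unfolding sublevel G_def by (auto split: if_splits)
    with \<sigma> have "0 \<le> \<sigma> * Inf S" by simp
    from linf_Svec_le[OF n this bound] show ?thesis by (simp add: mult.assoc)
  qed
  moreover have "{\<omega>\<in>space M. V \<omega> \<le> Inf S} \<in> sets M" using V by measurable
  ultimately show "\<exists>A\<in>sets M. 1 - \<alpha> \<le> measure M A \<and>
      (\<forall>\<omega>\<in>A. real n * linf p (Svec n x (\<lambda>i. \<epsilon> i \<omega>)) \<le> 2 * \<sigma> * Lambda_q M n p x \<sigma> \<epsilon> (1 - \<alpha>))"
    unfolding Lambda by blast
qed

end

lemma lasso_error_le_rate:
  assumes n: "n \<ge> 1" and nrm: "\<And>j. j < p \<Longrightarrow> En n (\<lambda>i. (x i j)\<^sup>2) = 1"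
    and las: "lasso_sol n p x (\<lambda>i. f i + e i) lam bh" and b0: "b0 \<in> vecs p"
    and c: "1 < c" and score: "c * real n * linf p (Svec n x e) \<le> lam"
    and kappa: "0 < kappa n p x (supp p b0) (real (card (supp p b0)) * ln n)"
      "1 / kappa n p x (supp p b0) (real (card (supp p b0)) * ln n) \<le> CR"
    and phi: "phi n p x (supp p b0) (real (card (supp p b0)) * ln n) \<le> CR"
    and ln_n: "2 \<le> ln n" "8 * CR ^ 3 * ((c + 1) / (c - 1))\<^sup>2 \<le> ln n"
  shows "norm2n n p x (\<lambda>j. bh j - b0 j) \<le>
    max 4 (8 * CR) * (sqrt (card (supp p b0)) / n * \<bar>lam\<bar> + sqrt (En n (\<lambda>i. (f i - xb x p i b0)\<^sup>2)))"
proof -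
  define s where "s = real (card (supp p b0))"
  define cs where "cs = sqrt (En n (\<lambda>i. (f i - xb x p i b0)\<^sup>2))"
  have CR: "0 < CR" using kappa by (smt (verit) divide_pos_pos)
  have "supp p b0 \<subseteq> {..<p}" "0 \<le> (c + 1) / (c - 1)" using c by (auto simp: supp_def)
  from restricted_eigenvalue_ge_of_sparse_eigenvalues[OF n nrm this kappa phi ln_n]
  have "restricted_eigenvalue_ge n p x (supp p b0) ((c + 1) / (c - 1)) (1 / (2 * CR))" .
  from lasso_error_le_restricted_eigenvalue[OF n las b0 c score this] CR
  have "norm2n n p x (\<lambda>j. bh j - b0 j) \<le> 4 * cs + 8 * CR * (sqrt s / n * lam)"
    unfolding s_def cs_def by (simp add: mult_ac)
  also have "8 * CR * (sqrt s / n * lam) \<le> 8 * CR * (sqrt s / n * \<bar>lam\<bar>)"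
    using CR by (intro mult_left_mono) (simp_all add: s_def)
  also have "\<dots> \<le> max 4 (8 * CR) * (sqrt s / n * \<bar>lam\<bar>)"
    by (rule mult_right_mono) (simp_all add: s_def)
  also have "4 * cs \<le> max 4 (8 * CR) * cs"
    unfolding cs_def by (intro mult_right_mono) (simp_all add: En_nonneg)
  finally show ?thesis unfolding s_def cs_def by (simp add: distrib_left)
qed

lemma measure_Int_ge:
  assumes "prob_space M" and A: "A \<in> sets M" and B: "B \<in> sets M"
  shows "measure M A + measure M B - 1 \<le> measure M (A \<inter> B)"
proof -
  interpret prob_space M by fact
  have "space M - (A \<inter> B) = (space M - A) \<union> (space M - B)" by blast
  hence "measure M (space M - (A \<inter> B)) \<le> measure M (space M - A) + measure M (space M - B)"
    using A B by (simp add: measure_Un_le)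
  moreover have "measure M (space M - (A \<inter> B)) = 1 - measure M (A \<inter> B)" using A B by (simp add: prob_compl)
  ultimately show ?thesis using A B prob_compl by simp
qed

lemma whp_iff_eventually:
  "whp M P \<longleftrightarrow>
     (\<forall>e>0. \<forall>\<^sub>F n in sequentially. \<exists>A\<in>sets (M n). 1 - e \<le> measure (M n) A \<and> (\<forall>\<omega>\<in>A. P n \<omega>))"
  by (simp add: whp_def eventually_sequentially)

lemma bigOP_of_whp: "whp M (\<lambda>n \<omega>. \<bar>X n \<omega>\<bar> \<le> C * b n) \<Longrightarrow> bigOP M X b"
  unfolding whp_def bigOP_def by blast

lemma whp_mono:
  assumes P: "whp M P" and PQ: "\<forall>\<^sub>F n in sequentially. \<forall>\<omega>\<in>space (M n). P n \<omega> \<longrightarrow> Q n \<omega>"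
  shows "whp M Q"
  unfolding whp_iff_eventually
proof (intro allI impI)
  fix e :: real assume "0 < e"
  with P have "\<forall>\<^sub>F n in sequentially. \<exists>A\<in>sets (M n). 1 - e \<le> measure (M n) A \<and> (\<forall>\<omega>\<in>A. P n \<omega>)"
    unfolding whp_iff_eventually by blast
  with PQ show "\<forall>\<^sub>F n in sequentially. \<exists>A\<in>sets (M n). 1 - e \<le> measure (M n) A \<and> (\<forall>\<omega>\<in>A. Q n \<omega>)"
  proof eventually_elim
    case (elim n)
    then obtain A where "A \<in> sets (M n)" "1 - e \<le> measure (M n) A" "\<forall>\<omega>\<in>A. P n \<omega>" by blast
    with elim(1) sets.sets_into_space[of A "M n"] show ?case by blast
  qed
qed

lemma bigOP_of_whp_bound:
  assumes prob: "\<And>n. prob_space (M n)" and Y: "bigOP M Y b"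
    and X: "whp M (\<lambda>n \<omega>. \<bar>X n \<omega>\<bar> \<le> K * (a n * \<bar>Y n \<omega>\<bar> + d n))"
    and K: "0 \<le> K" and a: "\<And>n. 0 \<le> a n" and b: "\<And>n. 0 \<le> b n" and d: "\<And>n. 0 \<le> d n"
  shows "bigOP M X (\<lambda>n. a n * b n + d n)"
  unfolding bigOP_def
proof (intro allI impI)
  fix e :: real assume "0 < e"
  hence e: "0 < e / 2" by simp
  obtain C N1 where N1: "\<And>n. n \<ge> N1 \<Longrightarrow> \<exists>A\<in>sets (M n). 1 - e / 2 \<le> measure (M n) A \<and>
      (\<forall>\<omega>\<in>A. \<bar>Y n \<omega>\<bar> \<le> C * b n)"
    using Y[unfolded bigOP_def, rule_format, OF e] by blast
  obtain N2 where N2: "\<And>n. n \<ge> N2 \<Longrightarrow> \<exists>A\<in>sets (M n). 1 - e / 2 \<le> measure (M n) A \<and>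
      (\<forall>\<omega>\<in>A. \<bar>X n \<omega>\<bar> \<le> K * (a n * \<bar>Y n \<omega>\<bar> + d n))"
    using X[unfolded whp_def, rule_format, OF e] by blast
  define C' where "C' = K * max 1 \<bar>C\<bar>"
  have "\<exists>A\<in>sets (M n). 1 - e \<le> measure (M n) A \<and> (\<forall>\<omega>\<in>A. \<bar>X n \<omega>\<bar> \<le> C' * (a n * b n + d n))"
    if n: "n \<ge> max N1 N2" for n
  proof -
    obtain A1 A2 where A: "A1 \<in> sets (M n)" "A2 \<in> sets (M n)"
      "1 - e / 2 \<le> measure (M n) A1" "1 - e / 2 \<le> measure (M n) A2"
      and A1: "\<forall>\<omega>\<in>A1. \<bar>Y n \<omega>\<bar> \<le> C * b n" and A2: "\<forall>\<omega>\<in>A2. \<bar>X n \<omega>\<bar> \<le> K * (a n * \<bar>Y n \<omega>\<bar> + d n)"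
      using N1[of n] N2[of n] n by auto
    have "\<bar>X n \<omega>\<bar> \<le> C' * (a n * b n + d n)" if "\<omega> \<in> A1 \<inter> A2" for \<omega>
    proof -
      define m where "m = max 1 \<bar>C\<bar>"
      have m: "1 \<le> m" unfolding m_def by simp
      have "\<bar>Y n \<omega>\<bar> \<le> C * b n" using A1 that by blast
      also have "\<dots> \<le> m * b n" unfolding m_def using b[of n] by (intro mult_right_mono) auto
      finally have "a n * \<bar>Y n \<omega>\<bar> \<le> a n * (m * b n)" using a[of n] by (rule mult_left_mono)
      moreover have "d n \<le> m * d n" using m d[of n] mult_right_mono[of 1 m "d n"] by simp
      ultimately have "a n * \<bar>Y n \<omega>\<bar> + d n \<le> m * (a n * b n + d n)" by (simp add: algebra_simps)
      hence "K * (a n * \<bar>Y n \<omega>\<bar> + d n) \<le> K * (m * (a n * b n + d n))" using K by (rule mult_left_mono)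
      moreover have "\<bar>X n \<omega>\<bar> \<le> K * (a n * \<bar>Y n \<omega>\<bar> + d n)" using A2 that by blast
      ultimately show ?thesis unfolding C'_def m_def by (simp add: mult.assoc)
    qed
    moreover have "1 - e \<le> measure (M n) (A1 \<inter> A2)"
      using measure_Int_ge[OF prob A(1,2)] A(3,4) by linarith
    ultimately show ?thesis using A(1,2) by blast
  qed
  thus "\<exists>C N. \<forall>n\<ge>N. \<exists>A\<in>sets (M n). 1 - e \<le> measure (M n) A \<and> (\<forall>\<omega>\<in>A. \<bar>X n \<omega>\<bar> \<le> C * (a n * b n + d n))"
    by blast
qed

definition penalty_condition ::
    "(nat \<Rightarrow> 'a measure) \<Rightarrow> (nat \<Rightarrow> nat) \<Rightarrow> (nat \<Rightarrow> nat \<Rightarrow> nat \<Rightarrow> real) \<Rightarrow> (nat \<Rightarrow> real) \<Rightarrow>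
     (nat \<Rightarrow> nat \<Rightarrow> 'a \<Rightarrow> real) \<Rightarrow> (nat \<Rightarrow> 'a \<Rightarrow> real) \<Rightarrow> bool" where
  "penalty_condition M p x sig eps lam \<longleftrightarrow>
     bigOP M lam (\<lambda>n. sig n * sqrt (real n * ln (real (p n)))) \<and>
     (\<exists>c>1. whp M (\<lambda>n \<omega>. c * real n * linf (p n) (Svec n (x n) (\<lambda>i. eps n i \<omega>)) \<le> lam n \<omega>))"

lemma penalty_condition_of_events:
  assumes \<alpha>: "\<alpha> \<longlonglongrightarrow> 0" and c: "1 < c"
    and events: "eventually (\<lambda>n. \<exists>A\<in>sets (M n). 1 - \<alpha> n \<le> measure (M n) A \<and> (\<forall>\<omega>\<in>A.
      c * real n * linf (p n) (Svec n (x n) (\<lambda>i. eps n i \<omega>)) \<le> lam n \<omega> \<and>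
      lam n \<omega> \<le> K * (sig n * sqrt (real n * ln (real (p n)))))) sequentially"
  shows "penalty_condition M p x sig eps lam"
proof -
  have "whp M (\<lambda>n \<omega>. c * real n * linf (p n) (Svec n (x n) (\<lambda>i. eps n i \<omega>)) \<le> lam n \<omega> \<and>
      lam n \<omega> \<le> K * (sig n * sqrt (real n * ln (real (p n)))))"
    unfolding whp_iff_eventually
  proof (intro allI impI)
    fix e :: real assume "0 < e"
    from events order_tendstoD(2)[OF \<alpha> this] show "\<forall>\<^sub>F n in sequentially. \<exists>A\<in>sets (M n).
        1 - e \<le> measure (M n) A \<and> (\<forall>\<omega>\<in>A. c * real n * linf (p n) (Svec n (x n) (\<lambda>i. eps n i \<omega>))
          \<le> lam n \<omega> \<and> lam n \<omega> \<le> K * (sig n * sqrt (real n * ln (real (p n)))))"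
    proof eventually_elim
      case (elim n)
      then obtain A where "A \<in> sets (M n)" "1 - \<alpha> n \<le> measure (M n) A" "\<forall>\<omega>\<in>A.
          c * real n * linf (p n) (Svec n (x n) (\<lambda>i. eps n i \<omega>)) \<le> lam n \<omega> \<and>
          lam n \<omega> \<le> K * (sig n * sqrt (real n * ln (real (p n))))" by blast
      with elim(2) show ?case by (intro bexI[of _ A] conjI) auto
    qed
  qed
  moreover have "\<bar>l\<bar> = l" if "c * real n * linf (p n) (Svec n (x n) (\<lambda>i. eps n i \<omega>)) \<le> l" for n \<omega> l
  proof -
    have "0 \<le> c * real n * linf (p n) (Svec n (x n) (\<lambda>i. eps n i \<omega>))" using c by (simp add: linf_nonneg)
    with that show ?thesis by linarith
  qed
  ultimately have lam: "whp M (\<lambda>n \<omega>. \<bar>lam n \<omega>\<bar> \<le> K * (sig n * sqrt (real n * ln (real (p n)))))"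
    and score: "whp M (\<lambda>n \<omega>. c * real n * linf (p n) (Svec n (x n) (\<lambda>i. eps n i \<omega>)) \<le> lam n \<omega>)"
    by (auto elim!: whp_mono intro!: always_eventually)
  show ?thesis unfolding penalty_condition_def using bigOP_of_whp[OF lam] score c by blast
qed

lemma penalty_condition_of_quantile:
  assumes sig: "\<And>n. 0 < sig n" and p_lim: "filterlim p at_top sequentially"
    and c: "1 < c" and \<alpha>: "\<And>n. 0 < \<alpha> n" "\<alpha> \<longlonglongrightarrow> 0"
    and C: "\<forall>\<^sub>F n in sequentially. ln (1 / \<alpha> n) \<le> C * ln (real (p n))"
    and lam: "\<And>n \<omega>. lam n \<omega> = 2 * c * sig n * Q n"
    and Q_le: "\<And>n. n \<ge> 1 \<Longrightarrow> p n \<ge> 2 \<Longrightarrow> \<alpha> n < 1 \<Longrightarrow> Q n \<le> sqrt n * tail_threshold (p n) (\<alpha> n)"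
    and event: "\<And>n. n \<ge> 1 \<Longrightarrow> p n \<ge> 2 \<Longrightarrow> \<alpha> n < 1 \<Longrightarrow> \<exists>A\<in>sets (M n). 1 - \<alpha> n \<le> measure (M n) A \<and>
      (\<forall>\<omega>\<in>A. real n * linf (p n) (Svec n (x n) (\<lambda>i. eps n i \<omega>)) \<le> 2 * sig n * Q n)"
  shows "penalty_condition M p x sig eps lam"
proof (rule penalty_condition_of_events[OF \<alpha>(2) c])
  define K where "K = 2 * c * sqrt (2 * (2 + \<bar>C\<bar>))"
  have "\<forall>\<^sub>F n in sequentially. 2 \<le> p n" using p_lim unfolding filterlim_at_top by blast
  moreover have "\<forall>\<^sub>F n in sequentially. \<alpha> n < 1" using order_tendstoD(2)[OF \<alpha>(2)] by simp
  ultimately have "\<forall>\<^sub>F n in sequentially. 1 \<le> n \<and> 2 \<le> p n \<and> \<alpha> n < 1 \<and> ln (1 / \<alpha> n) \<le> C * ln (real (p n))"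
    using C eventually_ge_at_top[of 1] by eventually_elim blast
  thus "\<forall>\<^sub>F n in sequentially. \<exists>A\<in>sets (M n). 1 - \<alpha> n \<le> measure (M n) A \<and> (\<forall>\<omega>\<in>A.
      c * real n * linf (p n) (Svec n (x n) (\<lambda>i. eps n i \<omega>)) \<le> lam n \<omega> \<and>
      lam n \<omega> \<le> K * (sig n * sqrt (real n * ln (real (p n)))))"
  proof eventually_elim
    case (elim n)
    hence n: "1 \<le> n" "2 \<le> p n" "\<alpha> n < 1" by auto
    have "tail_threshold (p n) (\<alpha> n) \<le> sqrt (2 * (2 + \<bar>C\<bar>)) * sqrt (ln (real (p n)))"
      using tail_threshold_le[OF \<alpha>(1) n(3,2)] elim by blast
    hence "sqrt n * tail_threshold (p n) (\<alpha> n) \<le> sqrt n * (sqrt (2 * (2 + \<bar>C\<bar>)) * sqrt (ln (real (p n))))"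
      by (rule mult_left_mono) simp
    hence "Q n \<le> sqrt n * (sqrt (2 * (2 + \<bar>C\<bar>)) * sqrt (ln (real (p n))))"
      using Q_le[OF n] by linarith
    hence "2 * c * sig n * Q n \<le> 2 * c * sig n * (sqrt n * (sqrt (2 * (2 + \<bar>C\<bar>)) * sqrt (ln (real (p n)))))"
      using c sig[of n] by (intro mult_left_mono) auto
    hence upper: "\<And>\<omega>. lam n \<omega> \<le> K * (sig n * sqrt (real n * ln (real (p n))))"
      unfolding lam K_def by (simp add: real_sqrt_mult mult_ac)
    obtain A where A: "A \<in> sets (M n)" "1 - \<alpha> n \<le> measure (M n) A"
      and score: "\<forall>\<omega>\<in>A. real n * linf (p n) (Svec n (x n) (\<lambda>i. eps n i \<omega>)) \<le> 2 * sig n * Q n"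
      using event[OF n] by blast
    have "c * real n * linf (p n) (Svec n (x n) (\<lambda>i. eps n i \<omega>)) \<le> lam n \<omega>" if "\<omega> \<in> A" for \<omega>
      using mult_left_mono[OF score[rule_format, OF that], of c] c unfolding lam by (simp add: mult_ac)
    with A upper show ?case by blast
  qed
qed

lemma penalty_condition_of_choice:
  fixes M :: "nat \<Rightarrow> 'a measure" and eps :: "nat \<Rightarrow> nat \<Rightarrow> 'a \<Rightarrow> real"
  assumes prob: "\<And>n. prob_space (M n)" and sig: "\<And>n. 0 < sig n"
    and indep: "\<And>n. n \<ge> 1 \<Longrightarrow> prob_space.indep_vars (M n) (\<lambda>_. borel) (eps n) {..<n}"
    and normal: "\<And>n i. n \<ge> 1 \<Longrightarrow> i < n \<Longrightarrow>
          distributed (M n) lborel (eps n i) (\<lambda>t. ennreal (normal_density 0 (sig n) t))"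
    and p_lim: "filterlim p at_top sequentially"
    and normalized: "\<And>n j. n \<ge> 1 \<Longrightarrow> j < p n \<Longrightarrow> En n (\<lambda>i. (x n i j)\<^sup>2) = 1"
    and c: "c > 1"
    and choice:
      "(\<exists>alpha :: nat \<Rightarrow> real. (\<forall>n. 0 < alpha n) \<and> alpha \<longlonglongrightarrow> 0 \<and>
          (\<exists>C. \<forall>\<^sub>F n in sequentially. ln (1 / alpha n) \<le> C * ln (real (p n))) \<and>
          (\<forall>n \<omega>. lam n \<omega> = 2 * c * sig n * sqrt (real n) * Phi_inv (1 - alpha n / (2 * real (p n)))))
     \<or> (\<exists>alpha :: nat \<Rightarrow> real. (\<forall>n. 0 < alpha n) \<and> alpha \<longlonglongrightarrow> 0 \<and>
          (\<exists>C. \<forall>\<^sub>F n in sequentially. ln (1 / alpha n) \<le> C * ln (real (p n))) \<and>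
          (\<forall>n \<omega>. lam n \<omega> = 2 * c * sig n * Lambda_q (M n) n (p n) (x n) (sig n) (eps n) (1 - alpha n)))
     \<or> (bigOP M lam (\<lambda>n. sig n * sqrt (real n * ln (real (p n)))) \<and>
        (\<exists>c'>1. whp M (\<lambda>n \<omega>. c' * real n * linf (p n) (Svec n (x n) (\<lambda>i. eps n i \<omega>)) \<le> lam n \<omega>)))"
  shows "penalty_condition M p x sig eps lam"
proof -
  have col: "(\<Sum>i<n. (x n i j)\<^sup>2) = real n" if "n \<ge> 1" "j < p n" for n j
    using normalized[OF that] that(1) unfolding En_def by (simp add: field_simps)
  note gaussian = prob sig indep normal _ col
  from choice show ?thesis
  proof (elim disjE exE conjE)
    fix \<alpha> :: "nat \<Rightarrow> real" and C
    assume \<alpha>: "\<forall>n. 0 < \<alpha> n" "\<alpha> \<longlonglongrightarrow> 0" "\<forall>\<^sub>F n in sequentially. ln (1 / \<alpha> n) \<le> C * ln (real (p n))"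
      and lam: "\<forall>n \<omega>. lam n \<omega> = 2 * c * sig n * sqrt (real n) * Phi_inv (1 - \<alpha> n / (2 * real (p n)))"
    show ?thesis
    proof (rule penalty_condition_of_quantile[OF sig p_lim c _ \<alpha>(2,3)])
      show "lam n \<omega> = 2 * c * sig n * (sqrt n * Phi_inv (1 - \<alpha> n / (2 * real (p n))))" for n \<omega>
        using lam by (simp add: mult.assoc)
      fix n assume n: "n \<ge> 1" "p n \<ge> 2" "\<alpha> n < 1"
      have "0 < \<alpha> n" using \<alpha>(1) by blast
      show "sqrt n * Phi_inv (1 - \<alpha> n / (2 * real (p n))) \<le> sqrt n * tail_threshold (p n) (\<alpha> n)"
        using Phi_inv_le_tail_threshold[OF \<open>0 < \<alpha> n\<close> n(3,2)] by (simp add: mult_left_mono)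
      show "\<exists>A\<in>sets (M n). 1 - \<alpha> n \<le> measure (M n) A \<and> (\<forall>\<omega>\<in>A.
          real n * linf (p n) (Svec n (x n) (\<lambda>i. eps n i \<omega>))
            \<le> 2 * sig n * (sqrt n * Phi_inv (1 - \<alpha> n / (2 * real (p n)))))"
        using Phi_inv_penalty_event[OF gaussian \<open>0 < \<alpha> n\<close> n(3,2)] n(1) by (simp add: mult.assoc)
    qed (use \<alpha>(1) in blast)
  next
    fix \<alpha> :: "nat \<Rightarrow> real" and C
    assume \<alpha>: "\<forall>n. 0 < \<alpha> n" "\<alpha> \<longlonglongrightarrow> 0" "\<forall>\<^sub>F n in sequentially. ln (1 / \<alpha> n) \<le> C * ln (real (p n))"
      and lam: "\<forall>n \<omega>. lam n \<omega> = 2 * c * sig n * Lambda_q (M n) n (p n) (x n) (sig n) (eps n) (1 - \<alpha> n)"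
    show ?thesis
    proof (rule penalty_condition_of_quantile[OF sig p_lim c _ \<alpha>(2,3)])
      show "lam n \<omega> = 2 * c * sig n * Lambda_q (M n) n (p n) (x n) (sig n) (eps n) (1 - \<alpha> n)" for n \<omega>
        using lam by blast
      fix n assume n: "n \<ge> 1" "p n \<ge> 2" "\<alpha> n < 1"
      have "0 < \<alpha> n" using \<alpha>(1) by blast
      from Lambda_q_penalty_event[OF gaussian \<open>0 < \<alpha> n\<close> n(3,2)] n(1)
      show "Lambda_q (M n) n (p n) (x n) (sig n) (eps n) (1 - \<alpha> n) \<le> sqrt n * tail_threshold (p n) (\<alpha> n)"
        "\<exists>A\<in>sets (M n). 1 - \<alpha> n \<le> measure (M n) A \<and> (\<forall>\<omega>\<in>A.
          real n * linf (p n) (Svec n (x n) (\<lambda>i. eps n i \<omega>))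
            \<le> 2 * sig n * Lambda_q (M n) n (p n) (x n) (sig n) (eps n) (1 - \<alpha> n))"
        by simp_all
    qed (use \<alpha>(1) in blast)
  qed (auto simp: penalty_condition_def)
qed

lemma eventually_ln_ge: "\<forall>\<^sub>F n in sequentially. X \<le> ln (real n)"
  using filterlim_compose[OF ln_at_top filterlim_real_sequentially] by (simp add: filterlim_at_top)

lemma ln_of_nat_nonneg: "0 \<le> ln (real k)"
  by (cases k) simp_all

lemma sqrt_rate_eq:
  "sqrt (real s) / real n * (\<sigma> * sqrt (real n * L)) = \<sigma> * sqrt (real s * L / real n)"
proof (cases "n = 0")
  case False
  hence "sqrt (real n) * sqrt (real n) = real n" "sqrt (real n) \<noteq> 0" by simp_all
  thus ?thesis by (simp add: real_sqrt_mult real_sqrt_divide field_simps)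
qed simp

lemma eventually_lasso_error_le:
  assumes normalized: "\<And>n j. n \<ge> 1 \<Longrightarrow> j < p n \<Longrightarrow> En n (\<lambda>i. (x n i j)\<^sup>2) = 1"
    and b0: "\<And>n. n \<ge> 1 \<Longrightarrow> b0 n \<in> vecs (p n)"
    and lasso: "\<And>n \<omega>. n \<ge> 1 \<Longrightarrow> \<omega> \<in> space (M n) \<Longrightarrow>
      lasso_sol n (p n) (x n) (\<lambda>i. f n i + e n i \<omega>) (lam n \<omega>) (bh n \<omega>)"
    and c: "1 < c"
    and RSE: "\<forall>\<^sub>F n in sequentially.
      0 < kappa n (p n) (x n) (supp (p n) (b0 n)) (real (card (supp (p n) (b0 n))) * ln n) \<and>
      1 / kappa n (p n) (x n) (supp (p n) (b0 n)) (real (card (supp (p n) (b0 n))) * ln n) \<le> CR \<and>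
      phi n (p n) (x n) (supp (p n) (b0 n)) (real (card (supp (p n) (b0 n))) * ln n) \<le> CR"
  shows "\<forall>\<^sub>F n in sequentially. \<forall>\<omega>\<in>space (M n).
    c * real n * linf (p n) (Svec n (x n) (\<lambda>i. e n i \<omega>)) \<le> lam n \<omega> \<longrightarrow>
    \<bar>norm2n n (p n) (x n) (\<lambda>j. bh n \<omega> j - b0 n j)\<bar> \<le> max 4 (8 * CR) *
      (sqrt (card (supp (p n) (b0 n))) / n * \<bar>lam n \<omega>\<bar> + sqrt (En n (\<lambda>i. (f n i - xb (x n) (p n) i (b0 n))\<^sup>2)))"
  using RSE eventually_ge_at_top[of 1] eventually_ln_ge[of "max 2 (8 * CR ^ 3 * ((c + 1) / (c - 1))\<^sup>2)"]
proof eventually_elim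
  case (elim n)
  hence n: "1 \<le> n" by simp
  from elim lasso_error_le_rate[OF n normalized[OF n] lasso[OF n] b0[OF n] c] show ?case
    by (simp add: norm2n_nonneg)
qed

theorem corollary1:
  fixes M :: "nat \<Rightarrow> 'a measure"
    and p :: "nat \<Rightarrow> nat"
    and x :: "nat \<Rightarrow> nat \<Rightarrow> nat \<Rightarrow> real"
    and f :: "nat \<Rightarrow> nat \<Rightarrow> real"
    and sig :: "nat \<Rightarrow> real"
    and eps :: "nat \<Rightarrow> nat \<Rightarrow> 'a \<Rightarrow> real"
    and beta0 :: "nat \<Rightarrow> nat \<Rightarrow> real"
    and lam :: "nat \<Rightarrow> 'a \<Rightarrow> real"
    and betahat :: "nat \<Rightarrow> 'a \<Rightarrow> nat \<Rightarrow> real"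
    and c :: real
  defines "s \<equiv> \<lambda>n. l0 (p n) (beta0 n)"
    and "T \<equiv> \<lambda>n. supp (p n) (beta0 n)"
    and "cs \<equiv> \<lambda>n. sqrt (En n (\<lambda>i. (f n i - xb (x n) (p n) i (beta0 n))\<^sup>2))"
  assumes prob: "\<And>n. prob_space (M n)"
    and sigma_pos: "\<And>n. 0 < sig n"
    and noise_indep: "\<And>n. n \<ge> 1 \<Longrightarrow> prob_space.indep_vars (M n) (\<lambda>_. borel) (eps n) {..<n}"
    and noise_normal: "\<And>n i. n \<ge> 1 \<Longrightarrow> i < n \<Longrightarrow>
          distributed (M n) lborel (eps n i) (\<lambda>t. ennreal (normal_density 0 (sig n) t))"
    and p_lim: "filterlim p at_top sequentially"
    and const_col: "\<And>n. n \<ge> 1 \<Longrightarrow> \<exists>j<p n. \<forall>i<n. x n i j = 1"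
    and normalized: "\<And>n j. n \<ge> 1 \<Longrightarrow> j < p n \<Longrightarrow> En n (\<lambda>i. (x n i j)\<^sup>2) = 1"
    and beta0_opt: "\<And>n. n \<ge> 1 \<Longrightarrow> oracle_sol n (p n) (x n) (f n) (sig n) (beta0 n)"
    and cs_bound: "\<exists>K. \<forall>n\<ge>1. cs n \<le> K * sig n * sqrt (real (s n) / real n)"
    and RSE: "\<exists>C. \<forall>\<^sub>F n in sequentially.
          0 < kappa n (p n) (x n) (T n) (real (s n) * ln (real n)) \<and>
          1 / kappa n (p n) (x n) (T n) (real (s n) * ln (real n)) \<le> C \<and>
          phi n (p n) (x n) (T n) (real (s n) * ln (real n)) \<le> C \<and>
          mu n (p n) (x n) (T n) (real (s n) * ln (real n)) \<le> C"
    and c_gt: "c > 1"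
    and lambda_choice:
      "(\<exists>alpha :: nat \<Rightarrow> real. (\<forall>n. 0 < alpha n) \<and> alpha \<longlonglongrightarrow> 0 \<and>
          (\<exists>C. \<forall>\<^sub>F n in sequentially. ln (1 / alpha n) \<le> C * ln (real (p n))) \<and>
          (\<forall>n \<omega>. lam n \<omega> = 2 * c * sig n * sqrt (real n) * Phi_inv (1 - alpha n / (2 * real (p n)))))
     \<or> (\<exists>alpha :: nat \<Rightarrow> real. (\<forall>n. 0 < alpha n) \<and> alpha \<longlonglongrightarrow> 0 \<and>
          (\<exists>C. \<forall>\<^sub>F n in sequentially. ln (1 / alpha n) \<le> C * ln (real (p n))) \<and>
          (\<forall>n \<omega>. lam n \<omega> = 2 * c * sig n * Lambda_q (M n) n (p n) (x n) (sig n) (eps n) (1 - alpha n)))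
     \<or> (bigOP M lam (\<lambda>n. sig n * sqrt (real n * ln (real (p n)))) \<and>
        (\<exists>c'>1. whp M (\<lambda>n \<omega>. c' * real n * linf (p n) (Svec n (x n) (\<lambda>i. eps n i \<omega>)) \<le> lam n \<omega>)))"
    and lasso: "\<And>n \<omega>. n \<ge> 1 \<Longrightarrow> \<omega> \<in> space (M n) \<Longrightarrow>
          lasso_sol n (p n) (x n) (\<lambda>i. f n i + eps n i \<omega>) (lam n \<omega>) (betahat n \<omega>)"
  shows "bigOP M (\<lambda>n \<omega>. norm2n n (p n) (x n) (\<lambda>j. betahat n \<omega> j - beta0 n j))
           (\<lambda>n. sig n * sqrt (real (s n) * ln (real (p n)) / real n) + cs n)"
proof -
  obtain c' where c': "1 < c'"
    and score: "whp M (\<lambda>n \<omega>. c' * real n * linf (p n) (Svec n (x n) (\<lambda>i. eps n i \<omega>)) \<le> lam n \<omega>)"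
    and lam_rate: "bigOP M lam (\<lambda>n. sig n * sqrt (real n * ln (real (p n))))"
    using penalty_condition_of_choice[OF prob sigma_pos noise_indep noise_normal p_lim normalized c_gt
        lambda_choice] unfolding penalty_condition_def by blast
  from RSE obtain CR where "\<forall>\<^sub>F n in sequentially.
      0 < kappa n (p n) (x n) (T n) (real (s n) * ln (real n)) \<and>
      1 / kappa n (p n) (x n) (T n) (real (s n) * ln (real n)) \<le> CR \<and>
      phi n (p n) (x n) (T n) (real (s n) * ln (real n)) \<le> CR \<and>
      mu n (p n) (x n) (T n) (real (s n) * ln (real n)) \<le> CR" by blast
  hence "\<forall>\<^sub>F n in sequentially.
      0 < kappa n (p n) (x n) (T n) (real (s n) * ln (real n)) \<and>
      1 / kappa n (p n) (x n) (T n) (real (s n) * ln (real n)) \<le> CR \<and>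
      phi n (p n) (x n) (T n) (real (s n) * ln (real n)) \<le> CR" by (rule eventually_mono) blast
  note RSE_CR = this[unfolded s_def T_def l0_def]
  have "beta0 n \<in> vecs (p n)" if "n \<ge> 1" for n using beta0_opt[OF that] unfolding oracle_sol_def by blast
  from eventually_lasso_error_le[OF normalized this lasso c' RSE_CR]
  have "\<forall>\<^sub>F n in sequentially. \<forall>\<omega>\<in>space (M n).
      c' * real n * linf (p n) (Svec n (x n) (\<lambda>i. eps n i \<omega>)) \<le> lam n \<omega> \<longrightarrow>
      \<bar>norm2n n (p n) (x n) (\<lambda>j. betahat n \<omega> j - beta0 n j)\<bar>
        \<le> max 4 (8 * CR) * (sqrt (s n) / n * \<bar>lam n \<omega>\<bar> + cs n)"
    unfolding s_def cs_def l0_def .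
  hence "bigOP M (\<lambda>n \<omega>. norm2n n (p n) (x n) (\<lambda>j. betahat n \<omega> j - beta0 n j))
      (\<lambda>n. sqrt (s n) / n * (sig n * sqrt (real n * ln (real (p n)))) + cs n)"
    using sigma_pos ln_of_nat_nonneg by (intro bigOP_of_whp_bound[OF prob lam_rate whp_mono[OF score]])
      (auto simp: cs_def En_nonneg less_imp_le)
  also have "(\<lambda>n. sqrt (s n) / n * (sig n * sqrt (real n * ln (real (p n)))) + cs n)
      = (\<lambda>n. sig n * sqrt (real (s n) * ln (real (p n)) / real n) + cs n)"
    by (simp only: sqrt_rate_eq)
  finally show ?thesis .
qed

end
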